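(* Let $\Gamma>0$. There exist $\alpha>0$, $h_0>0$ and $C>0$ such that for all $h\in(0,h_0)$ and every eigenpair $(\lambda,\psi)$ of $\mathcal L_{\mathsf{Gui}}(h)$ with $|\lambda-\frac18|\le\Gamma h^{2/3}$, $$\int_{\Omega\cap\{x\ge0\}}e^{\alpha h^{-1}x}\big(|\psi|^2+|h\,\partial_x\psi|^2\big)\,dx\,dy\le C\|\psi\|^2.$$
   Context: Let $\Omega=\{(x,y)\in\mathbb R^2: y>0,\ x<y<x+\pi\sqrt2\}$, $N=\{(x,0):-\pi\sqrt2<x<0\}\subset\partial\Omega$, and $H^1_{\mathsf{Mix}}(\Omega)=\{\psi\in H^1(\Omega):\psi=0\text{ on }\partial\Omega\setminus N\}$. For $h>0$, $\mathcal L_{\mathsf{Gui}}(h)=-h^2\partial_x^2-\partial_y^2$ is the self-adjoint operator associated with the form $\int_\Omega(h^2|\partial_x\psi|^2+|\partial_y\psi|^2)$ on $H^1_{\mathsf{Mix}}(\Omega)$ (Neumann on $N$, Dirichlet elsewhere). $\|\cdot\|$ is the $L^2(\Omega)$ norm. *)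

theory Defs
  imports "HOL-Analysis.Analysis"
begin

definition OmegaGui :: "(real \<times> real) set" where
  "OmegaGui = {(x, y). 0 < y \<and> x < y \<and> y < x + pi * sqrt 2}"

definition NeuGui :: "(real \<times> real) set" where
  "NeuGui = {(x, y). y = 0 \<and> - (pi * sqrt 2) < x \<and> x < 0}"

definition csupp :: "(real \<times> real \<Rightarrow> complex) \<Rightarrow> (real \<times> real) set" where
  "csupp f = closure {z. f z \<noteq> 0}"

definition C1c :: "(real \<times> real \<Rightarrow> complex) \<Rightarrow> bool" where
  "C1c f \<longleftrightarrow> compact (csupp f) \<and>
     (\<exists>dx dy. continuous_on UNIV dx \<and> continuous_on UNIV dy \<and>
        (\<forall>z. (f has_derivative (\<lambda>(u, v). of_real u * dx z + of_real v * dy z)) (at z)))"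

definition pdx :: "(real \<times> real \<Rightarrow> complex) \<Rightarrow> real \<times> real \<Rightarrow> complex" where
  "pdx f z = frechet_derivative f (at z) (1, 0)"

definition pdy :: "(real \<times> real \<Rightarrow> complex) \<Rightarrow> real \<times> real \<Rightarrow> complex" where
  "pdy f z = frechet_derivative f (at z) (0, 1)"

definition L2on :: "(real \<times> real) set \<Rightarrow> (real \<times> real \<Rightarrow> complex) \<Rightarrow> bool" where
  "L2on U f \<longleftrightarrow> set_borel_measurable lborel U f \<and>
     set_integrable lborel U (\<lambda>z. (cmod (f z))\<^sup>2)"

definition weak_dx :: "(real \<times> real) set \<Rightarrow> (real \<times> real \<Rightarrow> complex) \<Rightarrow> (real \<times> real \<Rightarrow> complex) \<Rightarrow> bool" where
  "weak_dx U f g \<longleftrightarrow> (\<forall>\<phi>. C1c \<phi> \<and> csupp \<phi> \<subseteq> U \<longrightarrow>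
      (LINT z:U|lborel. f z * pdx \<phi> z) = - (LINT z:U|lborel. g z * \<phi> z))"

definition weak_dy :: "(real \<times> real) set \<Rightarrow> (real \<times> real \<Rightarrow> complex) \<Rightarrow> (real \<times> real \<Rightarrow> complex) \<Rightarrow> bool" where
  "weak_dy U f g \<longleftrightarrow> (\<forall>\<phi>. C1c \<phi> \<and> csupp \<phi> \<subseteq> U \<longrightarrow>
      (LINT z:U|lborel. f z * pdy \<phi> z) = - (LINT z:U|lborel. g z * \<phi> z))"

definition H1on :: "(real \<times> real) set \<Rightarrow> (real \<times> real \<Rightarrow> complex) \<Rightarrow> (real \<times> real \<Rightarrow> complex)
    \<Rightarrow> (real \<times> real \<Rightarrow> complex) \<Rightarrow> bool" where
  "H1on U f gx gy \<longleftrightarrow> L2on U f \<and> L2on U gx \<and> L2on U gy \<and> weak_dx U f gx \<and> weak_dy U f gy"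

text \<open>H^1_Mix(Omega): the closure, in the H^1(Omega) norm, of (restrictions of) C^1 compactly
  supported functions whose support does not meet the Dirichlet part of the boundary
  (the boundary minus N). This is the set of H^1 functions with vanishing trace on
  the boundary minus N.\<close>
definition H1Mix :: "(real \<times> real \<Rightarrow> complex) \<Rightarrow> (real \<times> real \<Rightarrow> complex)
    \<Rightarrow> (real \<times> real \<Rightarrow> complex) \<Rightarrow> bool" where
  "H1Mix f gx gy \<longleftrightarrow> H1on OmegaGui f gx gy \<and>
     (\<exists>\<phi> :: nat \<Rightarrow> real \<times> real \<Rightarrow> complex.
        (\<forall>n. C1c (\<phi> n) \<and> csupp (\<phi> n) \<inter> (frontier OmegaGui - NeuGui) = {}) \<and>
        (\<lambda>n. LINT z:OmegaGui|lborel. (cmod (\<phi> n z - f z))\<^sup>2 + (cmod (pdx (\<phi> n) z - gx z))\<^sup>2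
                                     + (cmod (pdy (\<phi> n) z - gy z))\<^sup>2) \<longlonglongrightarrow> 0)"

text \<open>(lam, f) is an eigenpair of L_Gui(h), the self-adjoint operator associated with the
  form q(f,g) = int h^2 d_x f conj(d_x g) + d_y f conj(d_y g) on H^1_Mix: f lies in the form
  domain (with weak gradient (gx, gy)), is nonzero in L^2, and q(f, g) = lam <f, g> for all g
  in the form domain.\<close>
definition gui_eigenpair :: "real \<Rightarrow> real \<Rightarrow> (real \<times> real \<Rightarrow> complex) \<Rightarrow> (real \<times> real \<Rightarrow> complex)
    \<Rightarrow> (real \<times> real \<Rightarrow> complex) \<Rightarrow> bool" where
  "gui_eigenpair h lam f gx gy \<longleftrightarrow> H1Mix f gx gy \<and>
     \<not> (AE z in lborel. z \<in> OmegaGui \<longrightarrow> f z = 0) \<and>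
     (\<forall>g g1 g2. H1Mix g g1 g2 \<longrightarrow>
        (LINT z:OmegaGui|lborel. of_real (h\<^sup>2) * gx z * cnj (g1 z) + gy z * cnj (g2 z))
          = of_real lam * (LINT z:OmegaGui|lborel. f z * cnj (g z)))"

end

theory Submission
  imports Defs
begin

text \<open>
  On the half-guide x \<ge> 0 every vertical cross-section of the domain is an interval of length
  pi sqrt 2 < 2 pi with Dirichlet conditions at both ends, so |psi|^2 \<le> 4 |d_y psi|^2 after
  integration in y; the constant comes from the solution tan((y - m)/2)/2 of the Riccati equation
  F' = 1/4 + F^2. Testing the eigenvalue equation against E(x) psi, for a bounded weight E with
  |E'| \<le> a E, and absorbing the cross term gives
    (h^2/2) int E |d_x psi|^2 + int E |d_y psi|^2 \<le> (lam + (h a)^2/2) int E |psi|^2.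
  For a = 1/(8h) and lam \<le> 9/64 the factor lam + 1/128 stays below 1/4 by a fixed margin, so the
  Poincare inequality absorbs the weighted mass on x \<ge> 0, leaving the mass on x < 0, where E \<le> 1.
  The exponential weight exp(x/(8h)) itself is reached from the bounded weights
  exp(a x / sqrt(1 + (e x)^2)) by Fatou's lemma as e \<rightarrow> 0.
\<close>

section \<open>The guide and its test functions\<close>

lemma open_OmegaGui: "open OmegaGui"
proof -
  have e: "OmegaGui = {z. 0 < snd z} \<inter> {z. fst z < snd z} \<inter> {z. snd z < fst z + pi * sqrt 2}"
    by (auto simp: OmegaGui_def)
  have "open {z::real\<times>real. 0 < snd z}" "open {z::real\<times>real. fst z < snd z}"
    "open {z::real\<times>real. snd z < fst z + pi * sqrt 2}"
    by (intro open_Collect_less continuous_intros)+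
  then show ?thesis unfolding e by (intro open_Int)
qed

lemma OmegaGui_borel [measurable, simp]: "OmegaGui \<in> sets borel"
  by (rule borel_open[OF open_OmegaGui])

lemma width_less_2pi: "pi * sqrt 2 < 2 * pi"
proof -
  have "sqrt 2 < sqrt 4" by (simp only: real_sqrt_less_iff)
  then show ?thesis by simp
qed

lemma Dirichlet_boundary_point:
  assumes "0 \<le> x" "y = x \<or> y = x + pi * sqrt 2"
  shows "(x, y) \<in> frontier OmegaGui - NeuGui"
proof -
  define s :: real where "s = (if y = x then 1 else -1)"
  have "(x, y) \<in> closure OmegaGui"
    unfolding closure_approachable
  proof (intro allI impI)
    fix e :: real assume "e > 0"
    define t where "t = min (e/2) (pi * sqrt 2 / 2)"
    have p: "0 < pi * sqrt 2" by simp
    have "0 < t" "t < e" "t \<le> pi * sqrt 2 / 2" using \<open>e > 0\<close> p by (auto simp: t_def)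
    with p have t: "0 < t" "t < e" "t < pi * sqrt 2" by linarith+
    then have "(x, y + s * t) \<in> OmegaGui" using assms by (auto simp: OmegaGui_def s_def)
    moreover have "dist (x, y + s * t) (x, y) < e"
      using t by (simp add: dist_Pair_Pair dist_real_def s_def)
    ultimately show "\<exists>z\<in>OmegaGui. dist z (x, y) < e" by blast
  qed
  moreover have "(x, y) \<notin> interior OmegaGui"
    using interior_subset[of OmegaGui] assms by (auto simp: OmegaGui_def)
  moreover have "(x, y) \<notin> NeuGui" using assms by (auto simp: NeuGui_def)
  ultimately show ?thesis by (simp add: frontier_def)
qed

lemma notin_csupp_imp_zero: "z \<notin> csupp f \<Longrightarrow> f z = 0"
  unfolding csupp_def using closure_subset[of "{z. f z \<noteq> 0}"] by auto

lemma C1c_partials: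
  assumes "C1c \<phi>"
  shows "continuous_on UNIV (pdx \<phi>)" "continuous_on UNIV (pdy \<phi>)"
    "\<And>z. (\<phi> has_derivative (\<lambda>(u, v). of_real u * pdx \<phi> z + of_real v * pdy \<phi> z)) (at z)"
proof -
  obtain dx dy where c: "continuous_on UNIV dx" "continuous_on UNIV dy"
    and d: "\<And>z. (\<phi> has_derivative (\<lambda>(u, v). of_real u * dx z + of_real v * dy z)) (at z)"
    using assms unfolding C1c_def by blast
  have fr: "frechet_derivative \<phi> (at z) = (\<lambda>(u, v). of_real u * dx z + of_real v * dy z)" for z
    using frechet_derivative_at[OF d[of z]] by simp
  have ex: "pdx \<phi> = dx" and ey: "pdy \<phi> = dy"
    unfolding pdx_def pdy_def fr by (rule ext, simp)+
  show "continuous_on UNIV (pdx \<phi>)" "continuous_on UNIV (pdy \<phi>)" unfolding ex ey by (rule c)+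
  show "\<And>z. (\<phi> has_derivative (\<lambda>(u, v). of_real u * pdx \<phi> z + of_real v * pdy \<phi> z)) (at z)"
    unfolding ex ey by (rule d)
qed

lemma C1c_continuous: "C1c \<phi> \<Longrightarrow> continuous_on UNIV \<phi>"
  by (rule continuous_at_imp_continuous_on, rule ballI, rule has_derivative_continuous[OF C1c_partials(3)])

lemma C1c_partials_outside_csupp:
  assumes "z \<notin> csupp \<phi>"
  shows "pdx \<phi> z = 0" "pdy \<phi> z = 0"
proof -
  have "(\<phi> has_derivative (\<lambda>_. 0)) (at z)"
  proof (rule has_derivative_transform_within_open[where s = "- csupp \<phi>"])
    show "((\<lambda>_. 0) has_derivative (\<lambda>_. 0)) (at z)" by simp
    show "open (- csupp \<phi>)" by (simp add: csupp_def open_Compl)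
    show "z \<in> - csupp \<phi>" using assms by simp
    show "0 = \<phi> x" if "x \<in> - csupp \<phi>" for x
      using that by (simp add: notin_csupp_imp_zero)
  qed
  then have "frechet_derivative \<phi> (at z) = (\<lambda>_. 0)" by (rule frechet_derivative_at[symmetric])
  then show "pdx \<phi> z = 0" "pdy \<phi> z = 0" by (auto simp: pdx_def pdy_def)
qed

section \<open>Square-integrable functions on the guide\<close>

definition Omega_lborel :: "(real \<times> real) measure" where
  "Omega_lborel = restrict_space lborel OmegaGui"

lemma space_Omega_lborel [simp]: "space Omega_lborel = OmegaGui"
  by (simp add: Omega_lborel_def space_restrict_space)

lemma OmegaGui_space_lborel: "OmegaGui \<inter> space lborel \<in> sets lborel"
  by simp

lemma set_borel_measurable_OmegaGui_iff:
  "set_borel_measurable lborel OmegaGui f \<longleftrightarrow> (f :: _ \<Rightarrow> 'b::real_normed_vector) \<in> borel_measurable Omega_lborel"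
  unfolding Omega_lborel_def set_borel_measurable_def
  by (rule borel_measurable_restrict_space_iff[OF OmegaGui_space_lborel, symmetric])

lemma set_integrable_OmegaGui_iff:
  "set_integrable lborel OmegaGui f \<longleftrightarrow> integrable Omega_lborel (f :: _ \<Rightarrow> 'b::{banach, second_countable_topology})"
  unfolding Omega_lborel_def set_integrable_def
  by (rule integrable_restrict_space[OF OmegaGui_space_lborel, symmetric])

lemma set_integral_OmegaGui:
  "(LINT z:OmegaGui|lborel. f z) = integral\<^sup>L Omega_lborel (f :: _ \<Rightarrow> 'b::{banach, second_countable_topology})"
  unfolding Omega_lborel_def set_lebesgue_integral_def
  by (rule integral_restrict_space[OF OmegaGui_space_lborel, symmetric])

lemma nn_integral_Omega_lborel:
  "(\<integral>\<^sup>+ z. f z \<partial>Omega_lborel) = (\<integral>\<^sup>+ z. f z * indicator OmegaGui z \<partial>lborel)"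
  unfolding Omega_lborel_def by (rule nn_integral_restrict_space[OF OmegaGui_space_lborel])

lemma borel_measurable_continuous_Omega_lborel:
  "continuous_on UNIV f \<Longrightarrow> f \<in> borel_measurable Omega_lborel"
  unfolding Omega_lborel_def
  by (rule measurable_restrict_space1) (simp add: borel_measurable_continuous_onI)

definition square_integrable :: "'a measure \<Rightarrow> ('a \<Rightarrow> complex) \<Rightarrow> bool" where
  "square_integrable M f \<longleftrightarrow> f \<in> borel_measurable M \<and> integrable M (\<lambda>z. (cmod (f z))\<^sup>2)"

lemma L2on_OmegaGui_iff: "L2on OmegaGui f \<longleftrightarrow> square_integrable Omega_lborel f"
  unfolding L2on_def square_integrable_def set_borel_measurable_OmegaGui_iff set_integrable_OmegaGui_iff ..

lemma square_integrable_cnj: "square_integrable M f \<Longrightarrow> square_integrable M (\<lambda>z. cnj (f z))"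
  unfolding square_integrable_def
  by (auto intro: borel_measurable_continuous_on[where f = cnj] continuous_intros)

lemma square_integrable_cmult: "square_integrable M f \<Longrightarrow> square_integrable M (\<lambda>z. c * f z)"
  unfolding square_integrable_def by (auto simp: norm_mult power_mult_distrib)

lemma integrable_mult_square_integrable:
  assumes "square_integrable M f" "square_integrable M g"
  shows "integrable M (\<lambda>z. f z * g z)"
proof (rule Bochner_Integration.integrable_bound)
  show "integrable M (\<lambda>z. ((cmod (f z))\<^sup>2 + (cmod (g z))\<^sup>2) / 2)"
    using assms by (auto simp: square_integrable_def)
  show "(\<lambda>z. f z * g z) \<in> borel_measurable M"
    using assms by (auto simp: square_integrable_def)
  show "AE z in M. norm (f z * g z) \<le> norm (((cmod (f z))\<^sup>2 + (cmod (g z))\<^sup>2) / 2)"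
  proof (rule AE_I2)
    fix z
    show "norm (f z * g z) \<le> norm (((cmod (f z))\<^sup>2 + (cmod (g z))\<^sup>2) / 2)"
      using sum_squares_bound[of "cmod (f z)" "cmod (g z)"] by (simp add: norm_mult power2_eq_square)
  qed
qed

lemma norm_add_square_le:
  fixes a b :: complex
  assumes "d > 0"
  shows "(cmod (a + b))\<^sup>2 \<le> (1 + d) * (cmod a)\<^sup>2 + (1 + 1/d) * (cmod b)\<^sup>2"
proof -
  have "(cmod (a + b))\<^sup>2 \<le> (cmod a + cmod b)\<^sup>2"
    by (intro power_mono norm_triangle_ineq) simp
  also have "\<dots> \<le> (1 + d) * (cmod a)\<^sup>2 + (1 + 1/d) * (cmod b)\<^sup>2"
  proof -
    have "0 \<le> (d * cmod a - cmod b)\<^sup>2 / d" using assms by simp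
    then have "2 * cmod a * cmod b \<le> d * (cmod a)\<^sup>2 + (cmod b)\<^sup>2 / d"
      using assms by (simp add: power2_eq_square field_simps)
    then show ?thesis by (simp add: power2_eq_square algebra_simps)
  qed
  finally show ?thesis .
qed

lemma square_integrable_add:
  assumes "square_integrable M f" "square_integrable M g"
  shows "square_integrable M (\<lambda>z. f z + g z)"
  unfolding square_integrable_def
proof
  show m: "(\<lambda>z. f z + g z) \<in> borel_measurable M"
    using assms by (auto simp: square_integrable_def)
  show "integrable M (\<lambda>z. (cmod (f z + g z))\<^sup>2)"
  proof (rule Bochner_Integration.integrable_bound)
    show "integrable M (\<lambda>z. 2 * (cmod (f z))\<^sup>2 + 2 * (cmod (g z))\<^sup>2)"
      using assms by (auto simp: square_integrable_def)
    show "AE z in M. norm ((cmod (f z + g z))\<^sup>2) \<le> norm (2 * (cmod (f z))\<^sup>2 + 2 * (cmod (g z))\<^sup>2)"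
      using norm_add_square_le[of 1 "f _" "g _"] by (intro AE_I2) simp
  qed (use m in simp)
qed

lemma square_integrable_diff:
  assumes "square_integrable M f" "square_integrable M g"
  shows "square_integrable M (\<lambda>z. f z - g z)"
  using square_integrable_add[OF assms(1) square_integrable_cmult[OF assms(2), of "-1"]] by simp

lemma integrable_bounded_mult_square:
  assumes "square_integrable M f" "b \<in> borel_measurable M" "\<And>z. \<bar>b z\<bar> \<le> B"
  shows "integrable M (\<lambda>z. b z * (cmod (f z))\<^sup>2)"
proof (rule Bochner_Integration.integrable_bound)
  show "integrable M (\<lambda>z. B * (cmod (f z))\<^sup>2)"
    using assms(1) by (auto simp: square_integrable_def)
  show "(\<lambda>z. b z * (cmod (f z))\<^sup>2) \<in> borel_measurable M"
    using assms(1,2) by (auto simp: square_integrable_def)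
  have "0 \<le> B" using assms(3)[of undefined] by linarith
  then show "AE z in M. norm (b z * (cmod (f z))\<^sup>2) \<le> norm (B * (cmod (f z))\<^sup>2)"
    using assms(3) by (intro AE_I2) (simp add: abs_mult mult_right_mono)
qed

lemma square_integrable_bounded_mult:
  assumes "square_integrable M f" "b \<in> borel_measurable M" "\<And>z. \<bar>b z\<bar> \<le> B"
  shows "square_integrable M (\<lambda>z. of_real (b z) * f z)"
proof -
  have "\<bar>(b z)\<^sup>2\<bar> \<le> B\<^sup>2" for z
    using power_mono[OF assms(3)[of z] abs_ge_zero, of 2] by (simp only: power2_abs abs_power2)
  then have "integrable M (\<lambda>z. (b z)\<^sup>2 * (cmod (f z))\<^sup>2)"
    using assms(1,2) by (intro integrable_bounded_mult_square) auto
  moreover have "(\<lambda>z. of_real (b z) * f z) \<in> borel_measurable M"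
    using assms(1,2) by (auto simp: square_integrable_def)
  ultimately show ?thesis
    by (simp add: square_integrable_def norm_mult power_mult_distrib)
qed

lemma square_integrable_continuous_compact_support:
  assumes "continuous_on UNIV f" "compact K" "\<And>z. z \<notin> K \<Longrightarrow> f z = 0"
  shows "square_integrable Omega_lborel f"
proof -
  obtain B0 where "\<And>z. z \<in> K \<Longrightarrow> cmod (f z) \<le> B0"
    using compact_imp_bounded[OF compact_continuous_image[OF continuous_on_subset[OF assms(1)] assms(2)]]
    unfolding bounded_iff by auto
  then obtain B where B: "\<And>z. z \<in> K \<Longrightarrow> (cmod (f z))\<^sup>2 \<le> B"
    by (meson norm_ge_zero power_mono)
  have "emeasure lborel K < \<infinity>"
    by (rule emeasure_bounded_finite[OF compact_imp_bounded[OF assms(2)]])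
  then have "integrable lborel (\<lambda>z. B * indicator K z :: real)"
    using assms(2) by (intro integrable_mult_right integrable_real_indicator) (auto simp: compact_imp_closed)
  then have ik: "integrable Omega_lborel (\<lambda>z. B * indicator K z :: real)"
    unfolding Omega_lborel_def
    by (intro integrable_restrict_space[THEN iffD2, OF OmegaGui_space_lborel] integrable_mult_indicator) auto
  have m: "f \<in> borel_measurable Omega_lborel"
    by (rule borel_measurable_continuous_Omega_lborel[OF assms(1)])
  have "(cmod (f z))\<^sup>2 \<le> \<bar>B * indicator K z\<bar>" for z
    using order_trans[OF B abs_ge_self] assms(3) by (cases "z \<in> K") simp_all
  then have "integrable Omega_lborel (\<lambda>z. (cmod (f z))\<^sup>2)"
    using m by (intro Bochner_Integration.integrable_bound[OF ik] AE_I2) auto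
  with m show ?thesis by (simp add: square_integrable_def)
qed

lemma C1c_square_integrable:
  assumes "C1c \<phi>"
  shows "square_integrable Omega_lborel \<phi>" "square_integrable Omega_lborel (pdx \<phi>)"
    "square_integrable Omega_lborel (pdy \<phi>)"
proof -
  have K: "compact (csupp \<phi>)" using assms by (simp add: C1c_def)
  show "square_integrable Omega_lborel \<phi>"
    by (rule square_integrable_continuous_compact_support[OF C1c_continuous[OF assms] K])
      (rule notin_csupp_imp_zero)
  show "square_integrable Omega_lborel (pdx \<phi>)"
    by (rule square_integrable_continuous_compact_support[OF C1c_partials(1)[OF assms] K C1c_partials_outside_csupp(1)])
  show "square_integrable Omega_lborel (pdy \<phi>)"
    by (rule square_integrable_continuous_compact_support[OF C1c_partials(2)[OF assms] K C1c_partials_outside_csupp(2)])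
qed

lemma tendsto_add_nonneg_zero_iff:
  fixes a b :: "'a \<Rightarrow> real"
  assumes "\<And>n. 0 \<le> a n" "\<And>n. 0 \<le> b n"
  shows "((\<lambda>n. a n + b n) \<longlongrightarrow> 0) F \<longleftrightarrow> (a \<longlongrightarrow> 0) F \<and> (b \<longlongrightarrow> 0) F"
proof safe
  assume ab: "((\<lambda>n. a n + b n) \<longlongrightarrow> 0) F"
  show "(a \<longlongrightarrow> 0) F" "(b \<longlongrightarrow> 0) F"
    using assms by (auto intro!: tendsto_sandwich[OF _ _ tendsto_const ab] always_eventually)
qed (use tendsto_add in fastforce)

definition Omega_dist2 :: "(real \<times> real \<Rightarrow> complex) \<Rightarrow> (real \<times> real \<Rightarrow> complex) \<Rightarrow> real" where
  "Omega_dist2 f g = (\<integral>z. (cmod (f z - g z))\<^sup>2 \<partial>Omega_lborel)"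

lemma Omega_dist2_nonneg: "0 \<le> Omega_dist2 f g"
  unfolding Omega_dist2_def by (simp add: integral_nonneg_AE)

lemma Omega_dist2_commute: "Omega_dist2 f g = Omega_dist2 g f"
  unfolding Omega_dist2_def by (simp add: norm_minus_commute)

lemma H1Mix_iff_approximable:
  "H1Mix \<psi> gx gy \<longleftrightarrow> H1on OmegaGui \<psi> gx gy \<and>
    (\<exists>\<phi>. (\<forall>n. C1c (\<phi> n) \<and> csupp (\<phi> n) \<inter> (frontier OmegaGui - NeuGui) = {}) \<and>
      (\<lambda>n. Omega_dist2 (\<phi> n) \<psi>) \<longlonglongrightarrow> 0 \<and> (\<lambda>n. Omega_dist2 (pdx (\<phi> n)) gx) \<longlonglongrightarrow> 0 \<and>
      (\<lambda>n. Omega_dist2 (pdy (\<phi> n)) gy) \<longlonglongrightarrow> 0)"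
proof (cases "H1on OmegaGui \<psi> gx gy")
  case True
  then have L: "square_integrable Omega_lborel \<psi>" "square_integrable Omega_lborel gx"
    "square_integrable Omega_lborel gy"
    by (auto simp: H1on_def L2on_OmegaGui_iff)
  have split: "(LINT z:OmegaGui|lborel. (cmod (\<phi> n z - \<psi> z))\<^sup>2 + (cmod (pdx (\<phi> n) z - gx z))\<^sup>2
      + (cmod (pdy (\<phi> n) z - gy z))\<^sup>2)
    = Omega_dist2 (\<phi> n) \<psi> + Omega_dist2 (pdx (\<phi> n)) gx + Omega_dist2 (pdy (\<phi> n)) gy"
    if "C1c (\<phi> n)" for \<phi> :: "nat \<Rightarrow> _" and n
    using square_integrable_diff[OF C1c_square_integrable(1)[OF that] L(1)]
      square_integrable_diff[OF C1c_square_integrable(2)[OF that] L(2)]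
      square_integrable_diff[OF C1c_square_integrable(3)[OF that] L(3)]
    by (simp add: set_integral_OmegaGui Omega_dist2_def square_integrable_def)
  have approx_iff: "((\<lambda>n. LINT z:OmegaGui|lborel. (cmod (\<phi> n z - \<psi> z))\<^sup>2 + (cmod (pdx (\<phi> n) z - gx z))\<^sup>2
      + (cmod (pdy (\<phi> n) z - gy z))\<^sup>2) \<longlonglongrightarrow> 0) \<longleftrightarrow>
    (\<lambda>n. Omega_dist2 (\<phi> n) \<psi>) \<longlonglongrightarrow> 0 \<and> (\<lambda>n. Omega_dist2 (pdx (\<phi> n)) gx) \<longlonglongrightarrow> 0 \<and>
      (\<lambda>n. Omega_dist2 (pdy (\<phi> n)) gy) \<longlonglongrightarrow> 0"
    if "\<forall>n. C1c (\<phi> n)" for \<phi>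
    using that by (simp add: split tendsto_add_nonneg_zero_iff Omega_dist2_nonneg add_nonneg_nonneg)
  show ?thesis
    unfolding H1Mix_def using True approx_iff by meson
qed (simp add: H1Mix_def)

section \<open>Poincare inequality on the half-guide\<close>

lemma tan_half_has_derivative_Riccati:
  assumes "\<bar>y - m\<bar> < pi"
  shows "((\<lambda>y. tan ((y - m) / 2) / 2) has_real_derivative 1/4 + (tan ((y - m) / 2) / 2)\<^sup>2) (at y)"
proof -
  have "cos ((y - m) / 2) > 0"
    using assms by (intro cos_gt_zero_pi) (auto simp: field_simps)
  then have c: "cos ((y - m) / 2) \<noteq> 0" by simp
  have "((\<lambda>y. tan ((y - m) / 2) / 2) has_real_derivative inverse ((cos ((y - m) / 2))\<^sup>2) * (1/2) / 2) (at y)"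
    by (auto intro!: derivative_eq_intros c)
  moreover have "inverse ((cos ((y - m) / 2))\<^sup>2) * (1/2) / 2 = 1/4 + (tan ((y - m) / 2) / 2)\<^sup>2"
    using c by (simp add: tan_def field_simps power2_eq_square sin_squared_eq)
  ultimately show ?thesis by metis
qed

lemma norm_add_of_real_mult_square:
  "(cmod (v + of_real t * u))\<^sup>2 = (cmod v)\<^sup>2 + 2 * t * Re (v * cnj u) + t\<^sup>2 * (cmod u)\<^sup>2"
  unfolding cmod_power2 by (simp add: algebra_simps power2_eq_square)

lemma Poincare_interval:
  fixes u u' :: "real \<Rightarrow> complex"
  assumes ab: "a \<le> b" "b - a < 2 * pi"
    and der: "\<And>y. y \<in> {a..b} \<Longrightarrow> (u has_vector_derivative u' y) (at y within {a..b})"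
    and cont: "continuous_on {a..b} u'"
    and boundary: "u a = 0" "u b = 0"
  shows "integral {a..b} (\<lambda>y. (cmod (u y))\<^sup>2) \<le> 4 * integral {a..b} (\<lambda>y. (cmod (u' y))\<^sup>2)"
proof -
  \<comment> \<open>F solves the Riccati equation F' = 1/4 + F^2 on [a, b]; completing the square in
    |u' + F u|^2 \<ge> 0 gives |u'|^2 \<ge> |u|^2/4 - (F |u|^2)', and the last term integrates to 0.\<close>
  define F where "F y = tan ((y - (a + b) / 2) / 2) / 2" for y
  define G where "G y = F y * (cmod (u y))\<^sup>2" for y
  define G' where "G' y = (1/4 + (F y)\<^sup>2) * (cmod (u y))\<^sup>2 + 2 * F y * Re (u' y * cnj (u y))" for y
  have dG: "(G has_vector_derivative G' y) (at y within {a..b})" if "y \<in> {a..b}" for y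
  proof -
    have "\<bar>y - (a + b) / 2\<bar> < pi" using that ab by (auto simp: abs_if field_simps)
    from tan_half_has_derivative_Riccati[OF this]
    have dF: "(F has_real_derivative 1/4 + (F y)\<^sup>2) (at y within {a..b})"
      unfolding F_def[abs_def] by (rule has_field_derivative_at_within)
    have "((\<lambda>y. (Re (u y))\<^sup>2 + (Im (u y))\<^sup>2) has_real_derivative
        2 * Re (u y) * Re (u' y) + 2 * Im (u y) * Im (u' y)) (at y within {a..b})"
      using der[OF that] by (auto intro!: derivative_eq_intros)
    then have "((\<lambda>y. (cmod (u y))\<^sup>2) has_real_derivative 2 * Re (u' y * cnj (u y))) (at y within {a..b})"
      by (simp add: cmod_power2 algebra_simps)
    from DERIV_mult[OF dF this] show ?thesis
      unfolding G_def[abs_def] G'_def has_real_derivative_iff_has_vector_derivative[symmetric]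
      by (simp add: algebra_simps)
  qed
  have FTC: "(G' has_integral G b - G a) {a..b}"
    by (rule fundamental_theorem_of_calculus[OF ab(1) dG])
  moreover have "G b - G a = 0" using boundary by (simp add: G_def)
  ultimately have G'0: "integral {a..b} G' = 0" by (simp add: integral_unique)
  have pointwise: "(cmod (u y))\<^sup>2 / 4 - G' y \<le> (cmod (u' y))\<^sup>2" for y
    using norm_add_of_real_mult_square[of "u' y" "F y" "u y"] zero_le_power2[of "cmod (u' y + of_real (F y) * u y)"]
    unfolding G'_def distrib_right by linarith
  have "continuous_on {a..b} u"
    using der by (metis continuous_on_eq_continuous_within has_vector_derivative_continuous)
  then have i1: "(\<lambda>y. (cmod (u y))\<^sup>2) integrable_on {a..b}"
    by (intro integrable_continuous_interval continuous_intros)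
  have i2: "(\<lambda>y. (cmod (u' y))\<^sup>2) integrable_on {a..b}"
    by (intro integrable_continuous_interval continuous_intros cont)
  have "integral {a..b} (\<lambda>y. (cmod (u y))\<^sup>2 / 4 - G' y) \<le> integral {a..b} (\<lambda>y. (cmod (u' y))\<^sup>2)"
    using i1 FTC i2 pointwise by (intro integral_le) (auto intro!: integrable_diff)
  moreover have "integral {a..b} (\<lambda>y. (cmod (u y))\<^sup>2 / 4 - G' y) = integral {a..b} (\<lambda>y. (cmod (u y))\<^sup>2) / 4"
    using i1 FTC G'0 by (subst integral_diff) auto
  ultimately show ?thesis by simp
qed

lemma Poincare_slice:
  assumes \<phi>: "C1c \<phi>" and D: "csupp \<phi> \<inter> (frontier OmegaGui - NeuGui) = {}" and x: "0 \<le> x"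
  shows "integral {x..x + pi * sqrt 2} (\<lambda>y. (cmod (\<phi> (x, y)))\<^sup>2)
    \<le> 4 * integral {x..x + pi * sqrt 2} (\<lambda>y. (cmod (pdy \<phi> (x, y)))\<^sup>2)"
proof (rule Poincare_interval)
  show "((\<lambda>y. \<phi> (x, y)) has_vector_derivative pdy \<phi> (x, y)) (at y within {x..x + pi * sqrt 2})" for y
  proof -
    have "((\<lambda>y. (x, y)) has_derivative (\<lambda>t. (0, t))) (at y)"
      by (auto intro!: derivative_eq_intros)
    from has_derivative_compose[OF this C1c_partials(3)[OF \<phi>]]
    have "((\<lambda>y. \<phi> (x, y)) has_vector_derivative pdy \<phi> (x, y)) (at y)"
      by (simp add: has_vector_derivative_def scaleR_conv_of_real mult.commute)
    then show ?thesis by (rule has_vector_derivative_at_within)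
  qed
  show "continuous_on {x..x + pi * sqrt 2} (\<lambda>y. pdy \<phi> (x, y))"
    by (rule continuous_on_compose2[OF C1c_partials(2)[OF \<phi>]]) (auto intro!: continuous_intros)
  show "\<phi> (x, x) = 0" "\<phi> (x, x + pi * sqrt 2) = 0"
    using D Dirichlet_boundary_point[OF x, of x] Dirichlet_boundary_point[OF x, of "x + pi * sqrt 2"]
    by (auto intro: notin_csupp_imp_zero)
  show "x \<le> x + pi * sqrt 2" "x + pi * sqrt 2 - x < 2 * pi"
    using width_less_2pi by simp_all
qed

definition Omega_pos :: "(real \<times> real) set" where
  "Omega_pos = OmegaGui \<inter> {z. 0 \<le> fst z}"

lemma Omega_pos_borel [measurable]: "Omega_pos \<in> sets borel"
proof -
  have "{z::real\<times>real. 0 \<le> fst z} \<in> sets borel"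
    by (rule borel_closed) (intro closed_Collect_le continuous_intros)
  then show ?thesis unfolding Omega_pos_def by (intro sets.Int) auto
qed

lemma Omega_pos_subset: "Omega_pos \<subseteq> OmegaGui"
  by (auto simp: Omega_pos_def)

lemma indicator_Omega_pos:
  "indicator Omega_pos (x, y) = (if 0 \<le> x then indicator {x<..<x + pi * sqrt 2} y else 0 :: 'a::zero_neq_one)"
  by (auto simp: Omega_pos_def OmegaGui_def indicator_def)

lemma nn_integral_Omega_pos_slice:
  assumes "continuous_on UNIV g" "0 \<le> x" "0 \<le> c"
  shows "(\<integral>\<^sup>+ y. ennreal (c * (cmod (g (x, y)))\<^sup>2) * indicator Omega_pos (x, y) \<partial>lborel)
       = ennreal (c * integral {x..x + pi * sqrt 2} (\<lambda>y. (cmod (g (x, y)))\<^sup>2))"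
proof -
  have cg: "continuous_on UNIV (\<lambda>y. g (x, y))"
    by (rule continuous_on_compose2[OF assms(1)]) (auto intro!: continuous_intros)
  have "(\<lambda>y. (cmod (g (x, y)))\<^sup>2) integrable_on {x..x + pi * sqrt 2}"
    by (intro integrable_continuous_interval continuous_intros continuous_on_subset[OF cg]) auto
  then have hi: "((\<lambda>y. c * (cmod (g (x, y)))\<^sup>2) has_integral
      c * integral {x..x + pi * sqrt 2} (\<lambda>y. (cmod (g (x, y)))\<^sup>2)) {x<..<x + pi * sqrt 2}"
    unfolding has_integral_open_interval[of _ _ x "x + pi * sqrt 2", unfolded box_real cbox_interval]
    by (intro has_integral_mult_right integrable_integral)
  have "(\<integral>\<^sup>+ y. ennreal (c * (cmod (g (x, y)))\<^sup>2) * indicator {x<..<x + pi * sqrt 2} y \<partial>lborel)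
       = ennreal (c * integral {x..x + pi * sqrt 2} (\<lambda>y. (cmod (g (x, y)))\<^sup>2))"
    by (rule nn_integral_has_integral_lebesgue'[OF _ hi]) (use assms(3) in auto)
  then show ?thesis using assms(2) by (simp add: indicator_Omega_pos)
qed

lemma Poincare_slice_nn:
  assumes \<phi>: "C1c \<phi>" and D: "csupp \<phi> \<inter> (frontier OmegaGui - NeuGui) = {}" and c: "0 \<le> c"
  shows "(\<integral>\<^sup>+ y. ennreal (c * (cmod (\<phi> (x, y)))\<^sup>2) * indicator Omega_pos (x, y) \<partial>lborel)
    \<le> 4 * (\<integral>\<^sup>+ y. ennreal (c * (cmod (pdy \<phi> (x, y)))\<^sup>2) * indicator Omega_pos (x, y) \<partial>lborel)"
proof (cases "0 \<le> x")
  case True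
  have "(\<integral>\<^sup>+ y. ennreal (c * (cmod (\<phi> (x, y)))\<^sup>2) * indicator Omega_pos (x, y) \<partial>lborel)
      = ennreal (c * integral {x..x + pi * sqrt 2} (\<lambda>y. (cmod (\<phi> (x, y)))\<^sup>2))"
    by (rule nn_integral_Omega_pos_slice[OF C1c_continuous[OF \<phi>] True c])
  also have "\<dots> \<le> ennreal (4 * (c * integral {x..x + pi * sqrt 2} (\<lambda>y. (cmod (pdy \<phi> (x, y)))\<^sup>2)))"
    using mult_left_mono[OF Poincare_slice[OF \<phi> D True] c] by (intro ennreal_leI) (simp add: ac_simps)
  also have "\<dots> = 4 * (\<integral>\<^sup>+ y. ennreal (c * (cmod (pdy \<phi> (x, y)))\<^sup>2) * indicator Omega_pos (x, y) \<partial>lborel)"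
    by (simp add: nn_integral_Omega_pos_slice[OF C1c_partials(2)[OF \<phi>] True c] ennreal_mult')
  finally show ?thesis .
qed (simp add: indicator_Omega_pos)

lemma weighted_Poincare_C1c_nn:
  assumes \<phi>: "C1c \<phi>" and D: "csupp \<phi> \<inter> (frontier OmegaGui - NeuGui) = {}"
    and w: "w \<in> borel_measurable borel" "\<And>x. 0 \<le> w x"
  shows "(\<integral>\<^sup>+ z. ennreal (w (fst z) * (cmod (\<phi> z))\<^sup>2) * indicator Omega_pos z \<partial>lborel)
    \<le> 4 * (\<integral>\<^sup>+ z. ennreal (w (fst z) * (cmod (pdy \<phi> z))\<^sup>2) * indicator Omega_pos z \<partial>lborel)"
proof -
  have [measurable]: "\<phi> \<in> borel_measurable borel" "pdy \<phi> \<in> borel_measurable borel"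
    by (intro borel_measurable_continuous_onI C1c_continuous C1c_partials(2) \<phi>)+
  have "(fst :: real \<times> real \<Rightarrow> real) \<in> borel_measurable borel"
    by (intro borel_measurable_continuous_onI continuous_intros)
  from measurable_compose[OF this w(1)]
  have [measurable]: "(\<lambda>z::real\<times>real. w (fst z)) \<in> borel_measurable borel" .
  define F1 where "F1 z = ennreal (w (fst z) * (cmod (\<phi> z))\<^sup>2) * indicator Omega_pos z" for z
  define F2 where "F2 z = 4 * (ennreal (w (fst z) * (cmod (pdy \<phi> z))\<^sup>2) * indicator Omega_pos z)" for z
  have m: "F1 \<in> borel_measurable (lborel \<Otimes>\<^sub>M lborel)" "F2 \<in> borel_measurable (lborel \<Otimes>\<^sub>M lborel)"
    unfolding F1_def F2_def lborel_prod by measurable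
  have "integral\<^sup>N lborel F1 = (\<integral>\<^sup>+ x. \<integral>\<^sup>+ y. F1 (x, y) \<partial>lborel \<partial>lborel)"
    using lborel.nn_integral_fst[OF m(1)] by (simp add: lborel_prod)
  also have "\<dots> \<le> (\<integral>\<^sup>+ x. \<integral>\<^sup>+ y. F2 (x, y) \<partial>lborel \<partial>lborel)"
  proof (rule nn_integral_mono)
    fix x :: real
    have "(\<lambda>y. ennreal (w x * (cmod (pdy \<phi> (x, y)))\<^sup>2) * indicator Omega_pos (x, y)) \<in> borel_measurable lborel"
      by measurable
    then show "(\<integral>\<^sup>+ y. F1 (x, y) \<partial>lborel) \<le> (\<integral>\<^sup>+ y. F2 (x, y) \<partial>lborel)"
      using Poincare_slice_nn[OF \<phi> D w(2)] by (simp add: F1_def F2_def nn_integral_cmult)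
  qed
  also have "\<dots> = integral\<^sup>N lborel F2"
    using lborel.nn_integral_fst[OF m(2)] by (simp add: lborel_prod)
  also have "\<dots> = 4 * (\<integral>\<^sup>+ z. ennreal (w (fst z) * (cmod (pdy \<phi> z))\<^sup>2) * indicator Omega_pos z \<partial>lborel)"
    unfolding F2_def by (rule nn_integral_cmult) measurable
  finally show ?thesis unfolding F1_def .
qed

definition pos_weight :: "(real \<Rightarrow> real) \<Rightarrow> real \<times> real \<Rightarrow> real" where
  "pos_weight w z = w (fst z) * indicator Omega_pos z"

lemma pos_weight_measurable:
  assumes "w \<in> borel_measurable borel"
  shows "pos_weight w \<in> borel_measurable Omega_lborel"
proof -
  have "(fst :: real \<times> real \<Rightarrow> real) \<in> borel_measurable borel"
    by (intro borel_measurable_continuous_onI continuous_intros)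
  from measurable_compose[OF this assms]
  have "pos_weight w \<in> borel_measurable borel" unfolding pos_weight_def[abs_def] by measurable
  then show ?thesis by (simp add: Omega_lborel_def measurable_restrict_space1)
qed

lemma integrable_pos_weight_square:
  assumes "square_integrable Omega_lborel f" "w \<in> borel_measurable borel" "\<And>x. 0 \<le> w x" "\<And>x. w x \<le> B"
  shows "integrable Omega_lborel (\<lambda>z. pos_weight w z * (cmod (f z))\<^sup>2)"
proof (rule integrable_bounded_mult_square[OF assms(1) pos_weight_measurable[OF assms(2)]])
  show "\<bar>pos_weight w z\<bar> \<le> B" for z
    using assms(3,4)[of "fst z"] by (auto simp: pos_weight_def indicator_def)
qed

lemma weighted_Poincare_C1c:
  assumes \<phi>: "C1c \<phi>" "csupp \<phi> \<inter> (frontier OmegaGui - NeuGui) = {}"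
    and w: "w \<in> borel_measurable borel" "\<And>x. 0 \<le> w x" "\<And>x. w x \<le> B"
  shows "(\<integral>z. pos_weight w z * (cmod (\<phi> z))\<^sup>2 \<partial>Omega_lborel)
    \<le> 4 * (\<integral>z. pos_weight w z * (cmod (pdy \<phi> z))\<^sup>2 \<partial>Omega_lborel)"
proof -
  have to_lborel: "ennreal (\<integral>z. pos_weight w z * (cmod (f z))\<^sup>2 \<partial>Omega_lborel)
      = (\<integral>\<^sup>+ z. ennreal (w (fst z) * (cmod (f z))\<^sup>2) * indicator Omega_pos z \<partial>lborel)"
    if "square_integrable Omega_lborel f" for f
  proof -
    have "ennreal (\<integral>z. pos_weight w z * (cmod (f z))\<^sup>2 \<partial>Omega_lborel)
        = (\<integral>\<^sup>+ z. ennreal (pos_weight w z * (cmod (f z))\<^sup>2) \<partial>Omega_lborel)"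
      using integrable_pos_weight_square[OF that w] w(2)
      by (intro nn_integral_eq_integral[symmetric] AE_I2) (auto simp: pos_weight_def)
    also have "\<dots> = (\<integral>\<^sup>+ z. ennreal (w (fst z) * (cmod (f z))\<^sup>2) * indicator Omega_pos z \<partial>lborel)"
      unfolding nn_integral_Omega_lborel using Omega_pos_subset
      by (intro nn_integral_cong) (auto simp: pos_weight_def indicator_def)
    finally show ?thesis .
  qed
  have "ennreal (\<integral>z. pos_weight w z * (cmod (\<phi> z))\<^sup>2 \<partial>Omega_lborel)
      \<le> 4 * ennreal (\<integral>z. pos_weight w z * (cmod (pdy \<phi> z))\<^sup>2 \<partial>Omega_lborel)"
    using weighted_Poincare_C1c_nn[OF \<phi> w(1,2)]
    unfolding to_lborel[OF C1c_square_integrable(1)[OF \<phi>(1)]] to_lborel[OF C1c_square_integrable(3)[OF \<phi>(1)]] .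
  also have "\<dots> = ennreal (4 * (\<integral>z. pos_weight w z * (cmod (pdy \<phi> z))\<^sup>2 \<partial>Omega_lborel))"
    by (simp add: ennreal_mult')
  finally show ?thesis
    by (rule ennreal_le_iff[THEN iffD1, rotated])
      (auto intro!: integral_nonneg_AE simp: pos_weight_def w(2))
qed

lemma weighted_norm_square_le:
  fixes a b :: complex
  assumes "0 \<le> p" "p \<le> B" "d > 0"
  shows "p * (cmod a)\<^sup>2 \<le> (1 + d) * (p * (cmod b)\<^sup>2) + (1 + 1/d) * B * (cmod (a - b))\<^sup>2"
proof -
  have "p * (cmod a)\<^sup>2 \<le> p * ((1 + d) * (cmod b)\<^sup>2 + (1 + 1/d) * (cmod (a - b))\<^sup>2)"
    using norm_add_square_le[OF assms(3), of b "a - b"] assms(1) by (intro mult_left_mono) auto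
  also have "\<dots> \<le> (1 + d) * (p * (cmod b)\<^sup>2) + (1 + 1/d) * B * (cmod (a - b))\<^sup>2"
    using assms mult_right_mono[OF assms(2), of "(1 + 1/d) * (cmod (a - b))\<^sup>2"]
    by (simp add: algebra_simps)
  finally show ?thesis .
qed

lemma weighted_integral_perturb:
  assumes "square_integrable Omega_lborel f" "square_integrable Omega_lborel g"
    and w: "w \<in> borel_measurable borel" "\<And>x. 0 \<le> w x" "\<And>x. w x \<le> B" and "d > 0"
  shows "(\<integral>z. pos_weight w z * (cmod (f z))\<^sup>2 \<partial>Omega_lborel)
    \<le> (1 + d) * (\<integral>z. pos_weight w z * (cmod (g z))\<^sup>2 \<partial>Omega_lborel) + (1 + 1/d) * B * Omega_dist2 f g"
proof -
  have p: "0 \<le> pos_weight w z" "pos_weight w z \<le> B" for z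
    using w(2,3)[of "fst z"] by (auto simp: pos_weight_def indicator_def)
  have "integrable Omega_lborel (\<lambda>z. (cmod (f z - g z))\<^sup>2)"
    using square_integrable_diff[OF assms(1,2)] by (simp add: square_integrable_def)
  then have "(\<integral>z. pos_weight w z * (cmod (f z))\<^sup>2 \<partial>Omega_lborel)
    \<le> (\<integral>z. (1 + d) * (pos_weight w z * (cmod (g z))\<^sup>2) + (1 + 1/d) * B * (cmod (f z - g z))\<^sup>2 \<partial>Omega_lborel)"
    using integrable_pos_weight_square[OF assms(1) w] integrable_pos_weight_square[OF assms(2) w]
      weighted_norm_square_le[OF p \<open>d > 0\<close>]
    by (intro integral_mono) auto
  also have "\<dots> = (1 + d) * (\<integral>z. pos_weight w z * (cmod (g z))\<^sup>2 \<partial>Omega_lborel) + (1 + 1/d) * B * Omega_dist2 f g"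
    using integrable_pos_weight_square[OF assms(2) w] \<open>integrable Omega_lborel _\<close>
    by (simp add: Omega_dist2_def)
  finally show ?thesis .
qed

lemma weighted_Poincare_approximant:
  assumes \<phi>: "C1c \<phi>" "csupp \<phi> \<inter> (frontier OmegaGui - NeuGui) = {}"
    and L: "square_integrable Omega_lborel \<psi>" "square_integrable Omega_lborel gy"
    and w: "w \<in> borel_measurable borel" "\<And>x. 0 \<le> w x" "\<And>x. w x \<le> B" and "d > 0"
  shows "(\<integral>z. pos_weight w z * (cmod (\<psi> z))\<^sup>2 \<partial>Omega_lborel)
    \<le> 4 * (1 + d)\<^sup>2 * (\<integral>z. pos_weight w z * (cmod (gy z))\<^sup>2 \<partial>Omega_lborel)
      + (1 + 1/d) * B * (4 * (1 + d) * Omega_dist2 (pdy \<phi>) gy + Omega_dist2 \<phi> \<psi>)"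
proof -
  define K where "K = (1 + 1/d) * B"
  have "(\<integral>z. pos_weight w z * (cmod (\<psi> z))\<^sup>2 \<partial>Omega_lborel)
      \<le> (1 + d) * (\<integral>z. pos_weight w z * (cmod (\<phi> z))\<^sup>2 \<partial>Omega_lborel) + K * Omega_dist2 \<psi> \<phi>"
    unfolding K_def by (rule weighted_integral_perturb[OF L(1) C1c_square_integrable(1)[OF \<phi>(1)] w \<open>d > 0\<close>])
  also have "\<dots> \<le> (1 + d) * (4 * (\<integral>z. pos_weight w z * (cmod (pdy \<phi> z))\<^sup>2 \<partial>Omega_lborel))
      + K * Omega_dist2 \<psi> \<phi>"
    using weighted_Poincare_C1c[OF \<phi> w] \<open>d > 0\<close> by simp
  also have "\<dots> \<le> (1 + d) * (4 * ((1 + d) * (\<integral>z. pos_weight w z * (cmod (gy z))\<^sup>2 \<partial>Omega_lborel)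
      + K * Omega_dist2 (pdy \<phi>) gy)) + K * Omega_dist2 \<psi> \<phi>"
    unfolding K_def
    using weighted_integral_perturb[OF C1c_square_integrable(3)[OF \<phi>(1)] L(2) w \<open>d > 0\<close>] \<open>d > 0\<close>
    by (intro add_right_mono mult_left_mono) auto
  finally show ?thesis
    unfolding K_def[symmetric] by (simp add: Omega_dist2_commute power2_eq_square algebra_simps)
qed

lemma weighted_Poincare_H1Mix:
  assumes H: "H1Mix \<psi> gx gy"
    and w: "w \<in> borel_measurable borel" "\<And>x. 0 \<le> w x" "\<And>x. w x \<le> B"
  shows "(\<integral>z. pos_weight w z * (cmod (\<psi> z))\<^sup>2 \<partial>Omega_lborel)
    \<le> 4 * (\<integral>z. pos_weight w z * (cmod (gy z))\<^sup>2 \<partial>Omega_lborel)"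
proof -
  have L: "square_integrable Omega_lborel \<psi>" "square_integrable Omega_lborel gy"
    using H by (auto simp: H1Mix_def H1on_def L2on_OmegaGui_iff)
  obtain \<phi> where \<phi>: "\<And>n. C1c (\<phi> n)" "\<And>n. csupp (\<phi> n) \<inter> (frontier OmegaGui - NeuGui) = {}"
    and conv: "(\<lambda>n. Omega_dist2 (\<phi> n) \<psi>) \<longlonglongrightarrow> 0" "(\<lambda>n. Omega_dist2 (pdy (\<phi> n)) gy) \<longlonglongrightarrow> 0"
    using H unfolding H1Mix_iff_approximable by blast
  define X where "X = (\<integral>z. pos_weight w z * (cmod (\<psi> z))\<^sup>2 \<partial>Omega_lborel)"
  define Y where "Y = (\<integral>z. pos_weight w z * (cmod (gy z))\<^sup>2 \<partial>Omega_lborel)"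
  have approx: "X \<le> 4 * (1 + d)\<^sup>2 * Y" if "d > 0" for d
  proof (rule tendsto_lowerbound)
    show "(\<lambda>n. 4 * (1 + d)\<^sup>2 * Y + (1 + 1/d) * B * (4 * (1 + d) * Omega_dist2 (pdy (\<phi> n)) gy
        + Omega_dist2 (\<phi> n) \<psi>)) \<longlonglongrightarrow> 4 * (1 + d)\<^sup>2 * Y"
      using tendsto_add[OF tendsto_const tendsto_mult_right_zero[OF
            tendsto_add_zero[OF tendsto_mult_right_zero[OF conv(2)] conv(1)]]] by simp
  qed (use weighted_Poincare_approximant[OF \<phi> L w that] in \<open>auto simp: X_def Y_def\<close>)
  have "X \<le> 4 * Y"
  proof (rule tendsto_lowerbound)
    have "(\<lambda>n. 1 / real (Suc n)) \<longlonglongrightarrow> 0"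
      using LIMSEQ_inverse_real_of_nat by (simp add: inverse_eq_divide)
    then have "(\<lambda>n. 4 * (1 + 1 / real (Suc n))\<^sup>2 * Y) \<longlonglongrightarrow> 4 * (1 + 0)\<^sup>2 * Y"
      by (intro tendsto_intros)
    then show "(\<lambda>n. 4 * (1 + 1 / real (Suc n))\<^sup>2 * Y) \<longlonglongrightarrow> 4 * Y" by simp
  qed (use approx in auto)
  then show ?thesis by (simp add: X_def Y_def)
qed

section \<open>Multiplication by a function of x\<close>

lemma norm_of_real_mult_square_le:
  assumes "\<bar>b\<bar> \<le> B"
  shows "(cmod (of_real b * a))\<^sup>2 \<le> B\<^sup>2 * (cmod a)\<^sup>2"
proof -
  have "b\<^sup>2 \<le> B\<^sup>2"
    using power_mono[OF assms abs_ge_zero, of 2] by (simp only: power2_abs)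
  then show ?thesis by (simp add: norm_mult power_mult_distrib mult_right_mono)
qed

locale x_multiplier =
  fixes E E' :: "real \<Rightarrow> real" and B :: real
  assumes E_deriv: "\<And>x. (E has_real_derivative E' x) (at x)"
    and E'_continuous: "continuous_on UNIV E'"
    and E_bound: "\<And>x. \<bar>E x\<bar> \<le> B" and E'_bound: "\<And>x. \<bar>E' x\<bar> \<le> B"
begin

definition weighted :: "(real \<times> real \<Rightarrow> complex) \<Rightarrow> real \<times> real \<Rightarrow> complex" where
  "weighted f z = of_real (E (fst z)) * f z"

definition weighted_dx :: "(real \<times> real \<Rightarrow> complex) \<Rightarrow> (real \<times> real \<Rightarrow> complex) \<Rightarrow> real \<times> real \<Rightarrow> complex" where
  "weighted_dx f fx z = of_real (E (fst z)) * fx z + of_real (E' (fst z)) * f z"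

lemma E_continuous: "continuous_on UNIV E"
  using E_deriv by (meson DERIV_isCont continuous_at_imp_continuous_on)

lemma weighted_has_derivative:
  assumes "C1c \<phi>"
  shows "(weighted \<phi> has_derivative
    (\<lambda>(u, v). of_real u * weighted_dx \<phi> (pdx \<phi>) z + of_real v * weighted (pdy \<phi>) z)) (at z)"
proof -
  have "(E has_derivative (\<lambda>t. E' (fst z) * t)) (at (fst z))"
    using E_deriv[of "fst z"] by (simp add: has_field_derivative_def)
  from has_derivative_compose[OF has_derivative_fst[OF has_derivative_ident] this]
  have "((\<lambda>z. complex_of_real (E (fst z))) has_derivative (\<lambda>h. complex_of_real (E' (fst z) * fst h))) (at z)"
    by (rule has_derivative_of_real)
  from has_derivative_mult[OF this C1c_partials(3)[OF assms]]
  show ?thesis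
    unfolding weighted_def[abs_def] weighted_dx_def
    by (rule has_derivative_eq_rhs) (auto simp: algebra_simps)
qed

lemma C1c_weighted:
  assumes "C1c \<phi>"
  shows "C1c (weighted \<phi>)" "csupp (weighted \<phi>) \<subseteq> csupp \<phi>"
    "pdx (weighted \<phi>) = weighted_dx \<phi> (pdx \<phi>)" "pdy (weighted \<phi>) = weighted (pdy \<phi>)"
proof -
  show supp: "csupp (weighted \<phi>) \<subseteq> csupp \<phi>"
    unfolding csupp_def weighted_def by (rule closure_mono) auto
  have "compact (csupp \<phi> \<inter> csupp (weighted \<phi>))"
    using assms by (intro compact_Int_closed) (auto simp: C1c_def csupp_def)
  then have "compact (csupp (weighted \<phi>))"
    using supp by (simp add: Int_absorb1)
  moreover have "continuous_on UNIV (weighted_dx \<phi> (pdx \<phi>))" "continuous_on UNIV (weighted (pdy \<phi>))"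
    unfolding weighted_def[abs_def] weighted_dx_def[abs_def]
    using C1c_partials(1,2)[OF assms] C1c_continuous[OF assms]
    by (intro continuous_intros continuous_on_compose2[OF E_continuous]
        continuous_on_compose2[OF E'_continuous]; simp)+
  ultimately show "C1c (weighted \<phi>)"
    unfolding C1c_def using weighted_has_derivative[OF assms] by blast
  have "frechet_derivative (weighted \<phi>) (at z)
      = (\<lambda>(u, v). of_real u * weighted_dx \<phi> (pdx \<phi>) z + of_real v * weighted (pdy \<phi>) z)" for z
    by (rule frechet_derivative_at[OF weighted_has_derivative[OF assms], symmetric])
  then show "pdx (weighted \<phi>) = weighted_dx \<phi> (pdx \<phi>)" "pdy (weighted \<phi>) = weighted (pdy \<phi>)"
    by (auto simp: pdx_def pdy_def)
qed


lemma E_fst_measurable: "(\<lambda>z. E (fst z)) \<in> borel_measurable Omega_lborel"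
  "(\<lambda>z. E' (fst z)) \<in> borel_measurable Omega_lborel"
  by (intro borel_measurable_continuous_Omega_lborel continuous_on_compose2[OF E_continuous]
      continuous_on_compose2[OF E'_continuous] continuous_intros; simp)+

lemma square_integrable_weighted:
  "square_integrable Omega_lborel f \<Longrightarrow> square_integrable Omega_lborel (weighted f)"
  unfolding weighted_def by (rule square_integrable_bounded_mult[OF _ E_fst_measurable(1) E_bound])

lemma square_integrable_weighted_dx:
  assumes "square_integrable Omega_lborel f" "square_integrable Omega_lborel fx"
  shows "square_integrable Omega_lborel (weighted_dx f fx)"
  unfolding weighted_dx_def[abs_def]
  by (intro square_integrable_add square_integrable_bounded_mult[OF _ E_fst_measurable(1) E_bound]
      square_integrable_bounded_mult[OF _ E_fst_measurable(2) E'_bound] assms)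

lemma weak_dx_weighted:
  assumes L: "square_integrable Omega_lborel \<psi>" "square_integrable Omega_lborel gx"
    and "weak_dx OmegaGui \<psi> gx"
  shows "weak_dx OmegaGui (weighted \<psi>) (weighted_dx \<psi> gx)"
  unfolding weak_dx_def set_integral_OmegaGui
proof (intro allI impI)
  fix \<phi> assume \<phi>: "C1c \<phi> \<and> csupp \<phi> \<subseteq> OmegaGui"
  then have "C1c (weighted \<phi>) \<and> csupp (weighted \<phi>) \<subseteq> OmegaGui"
    using C1c_weighted(1,2)[of \<phi>] by blast
  then have weak: "(\<integral>z. \<psi> z * weighted_dx \<phi> (pdx \<phi>) z \<partial>Omega_lborel) = - (\<integral>z. gx z * weighted \<phi> z \<partial>Omega_lborel)"
    using assms(3) \<phi> C1c_weighted(3)[of \<phi>] unfolding weak_dx_def set_integral_OmegaGui by metis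
  have S: "square_integrable Omega_lborel \<phi>" "square_integrable Omega_lborel (pdx \<phi>)"
    using C1c_square_integrable \<phi> by auto
  define R where "R z = of_real (E' (fst z)) * \<psi> z * \<phi> z" for z
  have iR: "integrable Omega_lborel R"
    unfolding R_def using integrable_mult_square_integrable[OF
        square_integrable_bounded_mult[OF L(1) E_fst_measurable(2) E'_bound] S(1)] .
  have "(\<integral>z. \<psi> z * weighted_dx \<phi> (pdx \<phi>) z \<partial>Omega_lborel)
      = (\<integral>z. weighted \<psi> z * pdx \<phi> z + R z \<partial>Omega_lborel)"
    by (rule Bochner_Integration.integral_cong) (auto simp: weighted_def weighted_dx_def R_def algebra_simps)
  also have "\<dots> = (\<integral>z. weighted \<psi> z * pdx \<phi> z \<partial>Omega_lborel) + (\<integral>z. R z \<partial>Omega_lborel)"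
    using integrable_mult_square_integrable[OF square_integrable_weighted[OF L(1)] S(2)] iR by simp
  finally have e1: "(\<integral>z. \<psi> z * weighted_dx \<phi> (pdx \<phi>) z \<partial>Omega_lborel)
      = (\<integral>z. weighted \<psi> z * pdx \<phi> z \<partial>Omega_lborel) + (\<integral>z. R z \<partial>Omega_lborel)" .
  have "(\<integral>z. weighted_dx \<psi> gx z * \<phi> z \<partial>Omega_lborel)
      = (\<integral>z. gx z * weighted \<phi> z + R z \<partial>Omega_lborel)"
    by (rule Bochner_Integration.integral_cong) (auto simp: weighted_def weighted_dx_def R_def algebra_simps)
  also have "\<dots> = (\<integral>z. gx z * weighted \<phi> z \<partial>Omega_lborel) + (\<integral>z. R z \<partial>Omega_lborel)"
    using integrable_mult_square_integrable[OF L(2) square_integrable_weighted[OF S(1)]] iR by simp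
  finally have e2: "(\<integral>z. weighted_dx \<psi> gx z * \<phi> z \<partial>Omega_lborel)
      = (\<integral>z. gx z * weighted \<phi> z \<partial>Omega_lborel) + (\<integral>z. R z \<partial>Omega_lborel)" .
  show "(\<integral>z. weighted \<psi> z * pdx \<phi> z \<partial>Omega_lborel) = - (\<integral>z. weighted_dx \<psi> gx z * \<phi> z \<partial>Omega_lborel)"
  proof -
    have "(\<integral>z. weighted \<psi> z * pdx \<phi> z \<partial>Omega_lborel) + (\<integral>z. R z \<partial>Omega_lborel)
        = - (\<integral>z. gx z * weighted \<phi> z \<partial>Omega_lborel)"
      using weak e1 by simp
    then show ?thesis unfolding e2 by (simp add: eq_diff_eq[symmetric])
  qed
qed

lemma weak_dy_weighted:
  assumes "weak_dy OmegaGui \<psi> gy"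
  shows "weak_dy OmegaGui (weighted \<psi>) (weighted gy)"
  unfolding weak_dy_def set_integral_OmegaGui
proof (intro allI impI)
  fix \<phi> assume \<phi>: "C1c \<phi> \<and> csupp \<phi> \<subseteq> OmegaGui"
  then have "C1c (weighted \<phi>) \<and> csupp (weighted \<phi>) \<subseteq> OmegaGui"
    using C1c_weighted(1,2)[of \<phi>] by blast
  then have "(\<integral>z. \<psi> z * weighted (pdy \<phi>) z \<partial>Omega_lborel) = - (\<integral>z. gy z * weighted \<phi> z \<partial>Omega_lborel)"
    using assms \<phi> C1c_weighted(4)[of \<phi>] unfolding weak_dy_def set_integral_OmegaGui by metis
  then show "(\<integral>z. weighted \<psi> z * pdy \<phi> z \<partial>Omega_lborel) = - (\<integral>z. weighted gy z * \<phi> z \<partial>Omega_lborel)"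
    by (simp add: weighted_def ac_simps)
qed

lemma Omega_dist2_weighted_le:
  assumes "square_integrable Omega_lborel f" "square_integrable Omega_lborel g"
  shows "Omega_dist2 (weighted f) (weighted g) \<le> B\<^sup>2 * Omega_dist2 f g"
proof -
  have "(\<integral>z. (cmod (weighted f z - weighted g z))\<^sup>2 \<partial>Omega_lborel) \<le> (\<integral>z. B\<^sup>2 * (cmod (f z - g z))\<^sup>2 \<partial>Omega_lborel)"
    using square_integrable_diff[OF square_integrable_weighted[OF assms(1)] square_integrable_weighted[OF assms(2)]]
      square_integrable_diff[OF assms] norm_of_real_mult_square_le[OF E_bound]
    by (intro integral_mono) (auto simp: square_integrable_def weighted_def right_diff_distrib[symmetric])
  then show ?thesis by (simp add: Omega_dist2_def)
qed

lemma Omega_dist2_weighted_dx_le: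
  assumes "square_integrable Omega_lborel f" "square_integrable Omega_lborel g"
    "square_integrable Omega_lborel fx" "square_integrable Omega_lborel gx"
  shows "Omega_dist2 (weighted_dx f fx) (weighted_dx g gx) \<le> 2 * B\<^sup>2 * (Omega_dist2 fx gx + Omega_dist2 f g)"
proof -
  have pointwise: "(cmod (weighted_dx f fx z - weighted_dx g gx z))\<^sup>2
      \<le> 2 * B\<^sup>2 * (cmod (fx z - gx z))\<^sup>2 + 2 * B\<^sup>2 * (cmod (f z - g z))\<^sup>2" for z
  proof -
    have "weighted_dx f fx z - weighted_dx g gx z
        = of_real (E (fst z)) * (fx z - gx z) + of_real (E' (fst z)) * (f z - g z)"
      by (simp add: weighted_dx_def algebra_simps)
    then show ?thesis
      using norm_add_square_le[of 1 "of_real (E (fst z)) * (fx z - gx z)" "of_real (E' (fst z)) * (f z - g z)"]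
        norm_of_real_mult_square_le[OF E_bound, of "fst z" "fx z - gx z"]
        norm_of_real_mult_square_le[OF E'_bound, of "fst z" "f z - g z"]
      by simp
  qed
  have "(\<integral>z. (cmod (weighted_dx f fx z - weighted_dx g gx z))\<^sup>2 \<partial>Omega_lborel)
      \<le> (\<integral>z. 2 * B\<^sup>2 * (cmod (fx z - gx z))\<^sup>2 + 2 * B\<^sup>2 * (cmod (f z - g z))\<^sup>2 \<partial>Omega_lborel)"
    using square_integrable_diff[OF square_integrable_weighted_dx[OF assms(1,3)] square_integrable_weighted_dx[OF assms(2,4)]]
      square_integrable_diff[OF assms(1,2)] square_integrable_diff[OF assms(3,4)] pointwise
    by (intro integral_mono) (auto simp: square_integrable_def)
  then show ?thesis
    using square_integrable_diff[OF assms(1,2)] square_integrable_diff[OF assms(3,4)]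
    by (simp add: Omega_dist2_def square_integrable_def algebra_simps)
qed

lemma H1Mix_weighted:
  assumes H: "H1Mix \<psi> gx gy"
  shows "H1Mix (weighted \<psi>) (weighted_dx \<psi> gx) (weighted gy)"
proof -
  have L: "square_integrable Omega_lborel \<psi>" "square_integrable Omega_lborel gx" "square_integrable Omega_lborel gy"
    and weak: "weak_dx OmegaGui \<psi> gx" "weak_dy OmegaGui \<psi> gy"
    using H by (auto simp: H1Mix_def H1on_def L2on_OmegaGui_iff)
  obtain \<phi> where \<phi>: "\<And>n. C1c (\<phi> n)" "\<And>n. csupp (\<phi> n) \<inter> (frontier OmegaGui - NeuGui) = {}"
    and conv: "(\<lambda>n. Omega_dist2 (\<phi> n) \<psi>) \<longlonglongrightarrow> 0" "(\<lambda>n. Omega_dist2 (pdx (\<phi> n)) gx) \<longlonglongrightarrow> 0"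
      "(\<lambda>n. Omega_dist2 (pdy (\<phi> n)) gy) \<longlonglongrightarrow> 0"
    using H unfolding H1Mix_iff_approximable by blast
  note S = C1c_square_integrable[OF \<phi>(1)]
  have "H1on OmegaGui (weighted \<psi>) (weighted_dx \<psi> gx) (weighted gy)"
    unfolding H1on_def L2on_OmegaGui_iff
    using square_integrable_weighted[OF L(1)] square_integrable_weighted_dx[OF L(1,2)]
      square_integrable_weighted[OF L(3)] weak_dx_weighted[OF L(1,2) weak(1)] weak_dy_weighted[OF weak(2)]
    by blast
  moreover have "C1c (weighted (\<phi> n)) \<and> csupp (weighted (\<phi> n)) \<inter> (frontier OmegaGui - NeuGui) = {}" for n
    using C1c_weighted(1,2)[OF \<phi>(1)] \<phi>(2) by blast
  moreover have "(\<lambda>n. Omega_dist2 (weighted (\<phi> n)) (weighted \<psi>)) \<longlonglongrightarrow> 0"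
    using Omega_dist2_weighted_le[OF S(1) L(1)] Omega_dist2_nonneg
    by (intro Lim_null_comparison[OF _ tendsto_mult_right_zero[OF conv(1)]] always_eventually) auto
  moreover have "(\<lambda>n. Omega_dist2 (pdx (weighted (\<phi> n))) (weighted_dx \<psi> gx)) \<longlonglongrightarrow> 0"
    using Omega_dist2_weighted_dx_le[OF S(1) L(1) S(2) L(2)] Omega_dist2_nonneg
    by (intro Lim_null_comparison[OF _ tendsto_mult_right_zero[OF tendsto_add_zero[OF conv(2,1)]]]
        always_eventually) (auto simp: C1c_weighted(3)[OF \<phi>(1)])
  moreover have "(\<lambda>n. Omega_dist2 (pdy (weighted (\<phi> n))) (weighted gy)) \<longlonglongrightarrow> 0"
    using Omega_dist2_weighted_le[OF S(3) L(3)] Omega_dist2_nonneg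
    by (intro Lim_null_comparison[OF _ tendsto_mult_right_zero[OF conv(3)]] always_eventually)
      (auto simp: C1c_weighted(4)[OF \<phi>(1)])
  ultimately show ?thesis
    unfolding H1Mix_iff_approximable by (intro conjI exI[of _ "\<lambda>n. weighted (\<phi> n)"]) blast+
qed

end

section \<open>Bounded Agmon weights\<close>

definition agmon_phase :: "real \<Rightarrow> real \<Rightarrow> real" where
  "agmon_phase e x = x / sqrt (1 + (e * x)\<^sup>2)"

definition agmon_phase' :: "real \<Rightarrow> real \<Rightarrow> real" where
  "agmon_phase' e x = 1 / ((1 + (e * x)\<^sup>2) * sqrt (1 + (e * x)\<^sup>2))"

lemma agmon_phase_has_derivative: "(agmon_phase e has_real_derivative agmon_phase' e x) (at x)"
proof -
  define r where "r = sqrt (1 + (e * x)\<^sup>2)"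
  have r: "0 < r" "r\<^sup>2 = 1 + (e * x)\<^sup>2" by (simp_all add: r_def add_pos_nonneg)
  have "((\<lambda>x. x / sqrt (1 + (e * x)\<^sup>2)) has_real_derivative
      (r - x * (inverse r / 2 * (2 * (e * x) * e))) / r\<^sup>2) (at x)"
    using r(1) unfolding r_def by (auto intro!: derivative_eq_intros)
  moreover have "(r - x * (inverse r / 2 * (2 * (e * x) * e))) / r\<^sup>2 = (r\<^sup>2 - (e * x)\<^sup>2) / (r\<^sup>2 * r)"
    using r(1) by (simp add: field_simps power2_eq_square)
  ultimately show ?thesis
    unfolding agmon_phase_def[abs_def] agmon_phase'_def r(2) by (simp add: r_def)
qed

lemma agmon_phase'_bounds: "0 \<le> agmon_phase' e x" "agmon_phase' e x \<le> 1"
proof -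
  have "1 \<le> 1 + (e * x)\<^sup>2" "1 \<le> sqrt (1 + (e * x)\<^sup>2)" by simp_all
  then have "1 \<le> (1 + (e * x)\<^sup>2) * sqrt (1 + (e * x)\<^sup>2)" by (metis mult_mono' mult_1 zero_le_one)
  then show "0 \<le> agmon_phase' e x" "agmon_phase' e x \<le> 1" by (auto simp: agmon_phase'_def)
qed

lemma continuous_agmon_phase': "continuous_on UNIV (agmon_phase' e)"
proof -
  have "(1 + (e * x)\<^sup>2) * sqrt (1 + (e * x)\<^sup>2) \<noteq> 0" for x
    by (simp add: add_nonneg_eq_0_iff)
  then show ?thesis unfolding agmon_phase'_def[abs_def] by (intro continuous_intros) auto
qed

lemma abs_agmon_phase_le: "e > 0 \<Longrightarrow> \<bar>agmon_phase e x\<bar> \<le> 1 / e"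
proof -
  assume "e > 0"
  have "e * \<bar>x\<bar> = sqrt ((e * x)\<^sup>2)" using \<open>e > 0\<close> by (simp add: abs_mult)
  also have "\<dots> \<le> sqrt (1 + (e * x)\<^sup>2)" by (rule real_sqrt_le_mono) simp
  finally show ?thesis
    using \<open>e > 0\<close> by (simp add: agmon_phase_def abs_div field_simps add_pos_nonneg)
qed

lemma agmon_phase_nonpos: "x \<le> 0 \<Longrightarrow> agmon_phase e x \<le> 0"
  by (simp add: agmon_phase_def divide_nonpos_pos add_pos_nonneg)

lemma agmon_phase_tendsto: "(\<lambda>n. agmon_phase (1 / real (Suc n)) x) \<longlonglongrightarrow> x"
proof -
  have "(\<lambda>n. 1 / real (Suc n)) \<longlonglongrightarrow> 0"
    using LIMSEQ_inverse_real_of_nat by (simp add: inverse_eq_divide)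
  then have "(\<lambda>n. x / sqrt (1 + (1 / real (Suc n) * x)\<^sup>2)) \<longlonglongrightarrow> x / sqrt (1 + (0 * x)\<^sup>2)"
    by (intro tendsto_intros) (auto simp: add_pos_nonneg)
  then show ?thesis by (simp add: agmon_phase_def)
qed

definition agmon_weight :: "real \<Rightarrow> real \<Rightarrow> real \<Rightarrow> real" where
  "agmon_weight a e x = exp (a * agmon_phase e x)"

definition agmon_weight' :: "real \<Rightarrow> real \<Rightarrow> real \<Rightarrow> real" where
  "agmon_weight' a e x = a * agmon_phase' e x * agmon_weight a e x"

lemma agmon_weight_has_derivative:
  "(agmon_weight a e has_real_derivative agmon_weight' a e x) (at x)"
  unfolding agmon_weight_def[abs_def] agmon_weight'_def
  by (auto intro!: derivative_eq_intros agmon_phase_has_derivative simp: mult_ac)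

lemma continuous_agmon_weight: "continuous_on UNIV (agmon_weight a e)"
  using agmon_weight_has_derivative by (meson DERIV_isCont continuous_at_imp_continuous_on)

lemma agmon_weight_bounds:
  assumes "a > 0" "e > 0"
  shows "0 < agmon_weight a e x" "agmon_weight a e x \<le> exp (a / e)"
    "0 \<le> agmon_weight' a e x" "agmon_weight' a e x \<le> a * agmon_weight a e x"
proof -
  show "0 < agmon_weight a e x" by (simp add: agmon_weight_def)
  have "a * agmon_phase e x \<le> a * (1 / e)"
    using abs_agmon_phase_le[OF assms(2), of x] assms(1) by (intro mult_left_mono) auto
  then show "agmon_weight a e x \<le> exp (a / e)" by (simp add: agmon_weight_def)
  show "0 \<le> agmon_weight' a e x" "agmon_weight' a e x \<le> a * agmon_weight a e x"
    using agmon_phase'_bounds[of e x] assms(1)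
    by (auto simp: agmon_weight'_def agmon_weight_def mult_le_cancel_left1)
qed

lemma agmon_weight_le_1: "a > 0 \<Longrightarrow> x \<le> 0 \<Longrightarrow> agmon_weight a e x \<le> 1"
  using agmon_phase_nonpos[of x e] by (simp add: agmon_weight_def mult_nonneg_nonpos)

lemma x_multiplier_agmon_weight:
  assumes "a > 0" "e > 0"
  shows "x_multiplier (agmon_weight a e) (agmon_weight' a e) ((1 + a) * exp (a / e))"
proof
  show "continuous_on UNIV (agmon_weight' a e)"
    unfolding agmon_weight'_def[abs_def]
    by (intro continuous_intros continuous_agmon_weight continuous_agmon_phase')
  fix x
  note W = agmon_weight_bounds[OF assms, of x]
  have "exp (a / e) \<le> (1 + a) * exp (a / e)" using assms by (simp add: distrib_right)
  then have "agmon_weight a e x \<le> (1 + a) * exp (a / e)" using W(2) by linarith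
  moreover have "agmon_weight' a e x \<le> (1 + a) * exp (a / e)"
  proof -
    have "a * agmon_weight a e x \<le> a * exp (a / e)" using W(2) assms(1) by (simp add: mult_left_mono)
    also have "\<dots> \<le> (1 + a) * exp (a / e)" by (simp add: distrib_right)
    finally show ?thesis using W(4) by linarith
  qed
  ultimately show "\<bar>agmon_weight a e x\<bar> \<le> (1 + a) * exp (a / e)" "\<bar>agmon_weight' a e x\<bar> \<le> (1 + a) * exp (a / e)"
    using W by simp_all
qed (rule agmon_weight_has_derivative)

section \<open>The Agmon estimate\<close>

lemma cross_term_absorption:
  fixes x y :: complex and h a E E' :: real
  assumes "0 \<le> E" "\<bar>E'\<bar> \<le> a * E"
  shows "(h\<^sup>2/2) * (E * (cmod x)\<^sup>2)
    \<le> h\<^sup>2 * (E * (cmod x)\<^sup>2) + h\<^sup>2 * (E' * Re (x * cnj y)) + ((h * a)\<^sup>2/2) * (E * (cmod y)\<^sup>2)"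
proof -
  have "\<bar>E' * Re (x * cnj y)\<bar> \<le> (a * E) * (cmod x * cmod y)"
    using abs_Re_le_cmod[of "x * cnj y"] assms(2)
    by (simp add: abs_mult norm_mult mult_mono')
  then have "- (E' * Re (x * cnj y)) \<le> (a * E) * (cmod x * cmod y)" by linarith
  from mult_left_mono[OF this, of "h\<^sup>2"]
  have "- (h\<^sup>2 * (E' * Re (x * cnj y))) \<le> h\<^sup>2 * ((a * E) * (cmod x * cmod y))" by simp
  also have "\<dots> = E * ((h * cmod x) * (h * a * cmod y))" by (simp add: power2_eq_square ac_simps)
  also have "\<dots> \<le> E * (((h * cmod x)\<^sup>2 + (h * a * cmod y)\<^sup>2) / 2)"
    using sum_squares_bound[of "h * cmod x" "h * a * cmod y"] assms(1)
    by (intro mult_left_mono) (auto simp: power2_eq_square)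
  finally show ?thesis by (simp add: power_mult_distrib algebra_simps)
qed

locale agmon_multiplier = x_multiplier +
  fixes a :: real
  assumes E_nonneg: "\<And>x. 0 \<le> E x" and E'_le: "\<And>x. \<bar>E' x\<bar> \<le> a * E x"
begin

lemma weighted_energy_le:
  assumes eig: "gui_eigenpair h lam \<psi> gx gy"
  shows "(h\<^sup>2/2) * (\<integral>z. E (fst z) * (cmod (gx z))\<^sup>2 \<partial>Omega_lborel) + (\<integral>z. E (fst z) * (cmod (gy z))\<^sup>2 \<partial>Omega_lborel)
    \<le> (lam + (h * a)\<^sup>2/2) * (\<integral>z. E (fst z) * (cmod (\<psi> z))\<^sup>2 \<partial>Omega_lborel)"
proof -
  have H: "H1Mix \<psi> gx gy" using eig by (simp add: gui_eigenpair_def)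
  then have L: "square_integrable Omega_lborel \<psi>" "square_integrable Omega_lborel gx"
    "square_integrable Omega_lborel gy"
    by (auto simp: H1Mix_def H1on_def L2on_OmegaGui_iff)
  define F where "F z = of_real (h\<^sup>2) * gx z * cnj (weighted_dx \<psi> gx z) + gy z * cnj (weighted gy z)" for z
  have iF: "integrable Omega_lborel F"
    unfolding F_def
    by (intro Bochner_Integration.integrable_add integrable_mult_square_integrable square_integrable_cmult
        square_integrable_cnj square_integrable_weighted_dx square_integrable_weighted L)
  have i\<psi>: "integrable Omega_lborel (\<lambda>z. \<psi> z * cnj (weighted \<psi> z))"
    by (intro integrable_mult_square_integrable square_integrable_cnj square_integrable_weighted L)
  have "(\<integral>z. F z \<partial>Omega_lborel) = of_real lam * (\<integral>z. \<psi> z * cnj (weighted \<psi> z) \<partial>Omega_lborel)"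
    using eig H1Mix_weighted[OF H] unfolding gui_eigenpair_def set_integral_OmegaGui F_def by blast
  then have "(\<integral>z. Re (F z) \<partial>Omega_lborel) = lam * (\<integral>z. Re (\<psi> z * cnj (weighted \<psi> z)) \<partial>Omega_lborel)"
    using integral_Re[OF iF] integral_Re[OF i\<psi>] by simp
  also have "(\<lambda>z. Re (\<psi> z * cnj (weighted \<psi> z))) = (\<lambda>z. E (fst z) * (cmod (\<psi> z))\<^sup>2)"
    unfolding weighted_def cmod_power2 by (simp add: algebra_simps power2_eq_square)
  finally have identity: "(\<integral>z. Re (F z) \<partial>Omega_lborel) = lam * (\<integral>z. E (fst z) * (cmod (\<psi> z))\<^sup>2 \<partial>Omega_lborel)" .
  have ReF: "Re (F z) = h\<^sup>2 * (E (fst z) * (cmod (gx z))\<^sup>2) + h\<^sup>2 * (E' (fst z) * Re (gx z * cnj (\<psi> z)))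
      + E (fst z) * (cmod (gy z))\<^sup>2" for z
    unfolding F_def weighted_def weighted_dx_def cmod_power2 by (simp add: algebra_simps power2_eq_square)
  have iE: "integrable Omega_lborel (\<lambda>z. E (fst z) * (cmod (f z))\<^sup>2)" if "square_integrable Omega_lborel f" for f
    by (rule integrable_bounded_mult_square[OF that E_fst_measurable(1) E_bound])
  have "(h\<^sup>2/2) * (\<integral>z. E (fst z) * (cmod (gx z))\<^sup>2 \<partial>Omega_lborel) + (\<integral>z. E (fst z) * (cmod (gy z))\<^sup>2 \<partial>Omega_lborel)
      = (\<integral>z. (h\<^sup>2/2) * (E (fst z) * (cmod (gx z))\<^sup>2) + E (fst z) * (cmod (gy z))\<^sup>2 \<partial>Omega_lborel)"
    using iE[OF L(2)] iE[OF L(3)] by simp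
  also have "\<dots> \<le> (\<integral>z. Re (F z) + ((h * a)\<^sup>2/2) * (E (fst z) * (cmod (\<psi> z))\<^sup>2) \<partial>Omega_lborel)"
    using iE[OF L(2)] iE[OF L(3)] iE[OF L(1)] integrable_Re[OF iF]
      cross_term_absorption[OF E_nonneg E'_le]
    by (intro integral_mono) (auto simp: ReF)
  also have "\<dots> = lam * (\<integral>z. E (fst z) * (cmod (\<psi> z))\<^sup>2 \<partial>Omega_lborel)
      + ((h * a)\<^sup>2/2) * (\<integral>z. E (fst z) * (cmod (\<psi> z))\<^sup>2 \<partial>Omega_lborel)"
    using iE[OF L(1)] integrable_Re[OF iF] by (simp add: identity)
  finally show ?thesis by (simp add: distrib_right)
qed

end

lemma Agmon_arithmetic:
  fixes \<beta> SP D N G :: real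
  assumes "\<beta> \<le> 19/128" "0 \<le> SP" "0 \<le> D" "D \<le> N"
    "SP \<le> 4 * (\<beta> * (SP + D))" "G \<le> 2 * (\<beta> * (SP + D))"
  shows "SP + G \<le> 3 * N"
proof -
  obtain t where t: "t = \<beta> * (SP + D)" by simp
  have "t \<le> 19/128 * SP + 19/128 * D"
    unfolding t distrib_left[symmetric] using assms by (intro mult_right_mono) auto
  then show ?thesis using assms unfolding t[symmetric] by linarith
qed

context agmon_multiplier
begin

lemma E_weight: "E \<in> borel_measurable borel" "\<And>x. 0 \<le> E x" "\<And>x. E x \<le> B"
  using E_continuous E_bound E_nonneg by (auto intro: borel_measurable_continuous_onI)

lemma integrable_E_square:
  "square_integrable Omega_lborel f \<Longrightarrow> integrable Omega_lborel (\<lambda>z. E (fst z) * (cmod (f z))\<^sup>2)"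
  by (rule integrable_bounded_mult_square[OF _ E_fst_measurable(1) E_bound])

lemma pos_weight_square_le: "pos_weight E z * (cmod (f z))\<^sup>2 \<le> E (fst z) * (cmod (f z))\<^sup>2"
  using E_nonneg by (auto simp: pos_weight_def indicator_def)

lemma weighted_mass_outside_Omega_pos:
  assumes L: "square_integrable Omega_lborel \<psi>" and le_1: "\<And>x. x \<le> 0 \<Longrightarrow> E x \<le> 1"
  shows "0 \<le> (\<integral>z. E (fst z) * (cmod (\<psi> z))\<^sup>2 \<partial>Omega_lborel) - (\<integral>z. pos_weight E z * (cmod (\<psi> z))\<^sup>2 \<partial>Omega_lborel)"
    "(\<integral>z. E (fst z) * (cmod (\<psi> z))\<^sup>2 \<partial>Omega_lborel) - (\<integral>z. pos_weight E z * (cmod (\<psi> z))\<^sup>2 \<partial>Omega_lborel)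
      \<le> (\<integral>z. (cmod (\<psi> z))\<^sup>2 \<partial>Omega_lborel)"
proof -
  have "0 \<le> E (fst z) - pos_weight E z" "E (fst z) - pos_weight E z \<le> 1" if "z \<in> OmegaGui" for z
    using that E_nonneg[of "fst z"] le_1[of "fst z"] by (auto simp: pos_weight_def Omega_pos_def indicator_def)
  then have "0 \<le> (E (fst z) - pos_weight E z) * (cmod (\<psi> z))\<^sup>2"
    "(E (fst z) - pos_weight E z) * (cmod (\<psi> z))\<^sup>2 \<le> (cmod (\<psi> z))\<^sup>2" if "z \<in> OmegaGui" for z
    using that mult_right_mono[of _ 1 "(cmod (\<psi> z))\<^sup>2"] by auto
  moreover have "integrable Omega_lborel (\<lambda>z. (E (fst z) - pos_weight E z) * (cmod (\<psi> z))\<^sup>2)"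
    using integrable_E_square[OF L] integrable_pos_weight_square[OF L E_weight] by (simp add: left_diff_distrib)
  moreover have "(\<integral>z. E (fst z) * (cmod (\<psi> z))\<^sup>2 \<partial>Omega_lborel) - (\<integral>z. pos_weight E z * (cmod (\<psi> z))\<^sup>2 \<partial>Omega_lborel)
      = (\<integral>z. (E (fst z) - pos_weight E z) * (cmod (\<psi> z))\<^sup>2 \<partial>Omega_lborel)"
    using integrable_E_square[OF L] integrable_pos_weight_square[OF L E_weight] by (simp add: left_diff_distrib)
  ultimately show "0 \<le> (\<integral>z. E (fst z) * (cmod (\<psi> z))\<^sup>2 \<partial>Omega_lborel) - (\<integral>z. pos_weight E z * (cmod (\<psi> z))\<^sup>2 \<partial>Omega_lborel)"
    "(\<integral>z. E (fst z) * (cmod (\<psi> z))\<^sup>2 \<partial>Omega_lborel) - (\<integral>z. pos_weight E z * (cmod (\<psi> z))\<^sup>2 \<partial>Omega_lborel)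
      \<le> (\<integral>z. (cmod (\<psi> z))\<^sup>2 \<partial>Omega_lborel)"
    using L by (auto intro!: integral_nonneg_AE integral_mono_AE AE_I2 simp: square_integrable_def)
qed

lemma Agmon_estimate:
  assumes eig: "gui_eigenpair h lam \<psi> gx gy" and le_1: "\<And>x. x \<le> 0 \<Longrightarrow> E x \<le> 1"
    and lam: "lam + (h * a)\<^sup>2/2 \<le> 19/128"
  shows "(\<integral>z. pos_weight E z * (cmod (\<psi> z))\<^sup>2 \<partial>Omega_lborel) + h\<^sup>2 * (\<integral>z. pos_weight E z * (cmod (gx z))\<^sup>2 \<partial>Omega_lborel)
    \<le> 3 * (\<integral>z. (cmod (\<psi> z))\<^sup>2 \<partial>Omega_lborel)"
proof -
  have H: "H1Mix \<psi> gx gy" using eig by (simp add: gui_eigenpair_def)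
  then have L: "square_integrable Omega_lborel \<psi>" "square_integrable Omega_lborel gx"
    "square_integrable Omega_lborel gy"
    by (auto simp: H1Mix_def H1on_def L2on_OmegaGui_iff)
  define S where "S = (\<integral>z. E (fst z) * (cmod (\<psi> z))\<^sup>2 \<partial>Omega_lborel)"
  define T1 where "T1 = (\<integral>z. E (fst z) * (cmod (gx z))\<^sup>2 \<partial>Omega_lborel)"
  define T2 where "T2 = (\<integral>z. E (fst z) * (cmod (gy z))\<^sup>2 \<partial>Omega_lborel)"
  define SP where "SP = (\<integral>z. pos_weight E z * (cmod (\<psi> z))\<^sup>2 \<partial>Omega_lborel)"
  define GP where "GP = (\<integral>z. pos_weight E z * (cmod (gx z))\<^sup>2 \<partial>Omega_lborel)"
  define \<beta> where "\<beta> = lam + (h * a)\<^sup>2/2"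
  have energy: "(h\<^sup>2/2) * T1 + T2 \<le> \<beta> * S"
    using weighted_energy_le[OF eig] unfolding \<beta>_def S_def T1_def T2_def .
  have nonneg: "0 \<le> T1" "0 \<le> T2" "0 \<le> SP" "0 \<le> GP"
    unfolding T1_def T2_def SP_def GP_def using E_nonneg
    by (auto intro!: integral_nonneg_AE simp: pos_weight_def)
  have "SP \<le> 4 * (\<integral>z. pos_weight E z * (cmod (gy z))\<^sup>2 \<partial>Omega_lborel)"
    unfolding SP_def by (rule weighted_Poincare_H1Mix[OF H E_weight])
  also have "\<dots> \<le> 4 * T2"
    unfolding T2_def using integrable_pos_weight_square[OF L(3) E_weight] integrable_E_square[OF L(3)]
    by (intro mult_left_mono integral_mono pos_weight_square_le) auto
  moreover have "0 \<le> (h\<^sup>2/2) * T1" using nonneg(1) by simp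
  ultimately have SP: "SP \<le> 4 * (\<beta> * S)" using energy by linarith
  have "GP \<le> T1"
    unfolding GP_def T1_def using integrable_pos_weight_square[OF L(2) E_weight] integrable_E_square[OF L(2)]
    by (intro integral_mono pos_weight_square_le)
  then have "h\<^sup>2 * GP \<le> 2 * ((h\<^sup>2/2) * T1)" by (simp add: mult_left_mono)
  then have GP: "h\<^sup>2 * GP \<le> 2 * (\<beta> * S)" using energy nonneg(2) by linarith
  show ?thesis
    unfolding SP_def[symmetric] GP_def[symmetric]
    using Agmon_arithmetic[of \<beta> SP "S - SP"] lam nonneg SP GP
      weighted_mass_outside_Omega_pos[OF L(1) le_1]
    by (simp add: \<beta>_def S_def SP_def)
qed

end

lemma regularized_Agmon_estimate:
  assumes h: "0 < h" and e: "0 < e" and eig: "gui_eigenpair h lam \<psi> gx gy" and lam: "lam \<le> 9/64"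
  shows "(\<integral>\<^sup>+ z. ennreal (pos_weight (agmon_weight (1/(8*h)) e) z * ((cmod (\<psi> z))\<^sup>2 + (cmod (of_real h * gx z))\<^sup>2))
      \<partial>Omega_lborel) \<le> ennreal (3 * (\<integral>z. (cmod (\<psi> z))\<^sup>2 \<partial>Omega_lborel))"
proof -
  define a where "a = 1/(8*h)"
  have a: "0 < a" "(h * a)\<^sup>2/2 = 1/128" using h by (simp_all add: a_def power2_eq_square)
  interpret agmon_multiplier "agmon_weight a e" "agmon_weight' a e" "(1 + a) * exp (a / e)" a
    using x_multiplier_agmon_weight[OF a(1) e] agmon_weight_bounds[OF a(1) e]
    by (intro agmon_multiplier.intro agmon_multiplier_axioms.intro) (auto intro: less_imp_le)
  have L: "square_integrable Omega_lborel \<psi>" "square_integrable Omega_lborel gx"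
    using eig by (auto simp: gui_eigenpair_def H1Mix_def H1on_def L2on_OmegaGui_iff)
  define P where "P z = pos_weight (agmon_weight a e) z * ((cmod (\<psi> z))\<^sup>2 + (cmod (of_real h * gx z))\<^sup>2)" for z
  have P: "P = (\<lambda>z. pos_weight (agmon_weight a e) z * (cmod (\<psi> z))\<^sup>2
      + h\<^sup>2 * (pos_weight (agmon_weight a e) z * (cmod (gx z))\<^sup>2))"
    by (auto simp: P_def norm_mult power_mult_distrib algebra_simps)
  note integrable = integrable_pos_weight_square[OF L(1) E_weight] integrable_pos_weight_square[OF L(2) E_weight]
  have "(\<integral>\<^sup>+ z. ennreal (P z) \<partial>Omega_lborel) = ennreal (\<integral>z. P z \<partial>Omega_lborel)"
    using integrable E_nonneg by (intro nn_integral_eq_integral AE_I2) (auto simp: P P_def pos_weight_def)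
  also have "\<dots> \<le> ennreal (3 * (\<integral>z. (cmod (\<psi> z))\<^sup>2 \<partial>Omega_lborel))"
    using Agmon_estimate[OF eig agmon_weight_le_1[OF a(1)]] lam a(2) integrable
    by (intro ennreal_leI) (simp add: P)
  finally show ?thesis unfolding P_def a_def .
qed

lemma nn_integral_exp_weight_le:
  assumes Q: "Q \<in> borel_measurable Omega_lborel" "\<And>z. 0 \<le> Q z"
    and bound: "\<And>e. e > 0 \<Longrightarrow> (\<integral>\<^sup>+ z. ennreal (pos_weight (agmon_weight a e) z * Q z) \<partial>Omega_lborel) \<le> C"
  shows "(\<integral>\<^sup>+ z \<in> OmegaGui \<inter> {z. fst z \<ge> 0}. ennreal (exp (a * fst z) * Q z) \<partial>lborel) \<le> C"
proof -
  define u where "u n z = ennreal (pos_weight (agmon_weight a (1 / real (Suc n))) z * Q z)" for n z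
  define f where "f z = ennreal (exp (a * fst z) * Q z) * indicator Omega_pos z" for z
  have "(\<lambda>z. pos_weight (agmon_weight a (1 / real (Suc n))) z * Q z) \<in> borel_measurable Omega_lborel" for n
    using pos_weight_measurable[OF borel_measurable_continuous_onI[OF continuous_agmon_weight]] Q(1)
    by (rule borel_measurable_times)
  then have u_measurable: "u n \<in> borel_measurable Omega_lborel" for n
    unfolding u_def by simp
  have u_lim: "(\<lambda>n. u n z) \<longlonglongrightarrow> f z" for z
  proof -
    have "(\<lambda>n. agmon_weight a (1 / real (Suc n)) (fst z) * Q z) \<longlonglongrightarrow> exp (a * fst z) * Q z"
      unfolding agmon_weight_def by (intro tendsto_intros agmon_phase_tendsto)
    from tendsto_ennrealI[OF this] show ?thesis
      unfolding u_def f_def pos_weight_def by (cases "z \<in> Omega_pos") simp_all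
  qed
  have "(\<integral>\<^sup>+ z. f z \<partial>Omega_lborel) = (\<integral>\<^sup>+ z. liminf (\<lambda>n. u n z) \<partial>Omega_lborel)"
    by (intro nn_integral_cong lim_imp_Liminf[OF _ u_lim, symmetric]) simp
  also have "\<dots> \<le> liminf (\<lambda>n. \<integral>\<^sup>+ z. u n z \<partial>Omega_lborel)"
    by (rule nn_integral_liminf[OF u_measurable])
  also have "\<dots> \<le> liminf (\<lambda>n. C)"
    using bound unfolding u_def by (intro Liminf_mono always_eventually) simp
  also have "\<dots> = C" by (simp add: Liminf_const)
  also have "(\<integral>\<^sup>+ z. f z \<partial>Omega_lborel)
      = (\<integral>\<^sup>+ z \<in> OmegaGui \<inter> {z. fst z \<ge> 0}. ennreal (exp (a * fst z) * Q z) \<partial>lborel)"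
    unfolding nn_integral_Omega_lborel f_def
    by (intro nn_integral_cong) (simp add: Omega_pos_def indicator_def)
  finally show ?thesis .
qed

lemma Agmon_estimate_exp:
  assumes h: "0 < h" and eig: "gui_eigenpair h lam \<psi> gx gy" and lam: "lam \<le> 9/64"
  shows "(\<integral>\<^sup>+ z \<in> OmegaGui \<inter> {z. fst z \<ge> 0}.
      ennreal (exp (1/8 / h * fst z) * ((cmod (\<psi> z))\<^sup>2 + (cmod (of_real h * gx z))\<^sup>2)) \<partial>lborel)
    \<le> ennreal (3 * (LINT z:OmegaGui|lborel. (cmod (\<psi> z))\<^sup>2))"
proof -
  have L: "square_integrable Omega_lborel \<psi>" "square_integrable Omega_lborel gx"
    using eig by (auto simp: gui_eigenpair_def H1Mix_def H1on_def L2on_OmegaGui_iff)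
  have "(\<integral>\<^sup>+ z \<in> OmegaGui \<inter> {z. fst z \<ge> 0}.
      ennreal (exp (1/(8*h) * fst z) * ((cmod (\<psi> z))\<^sup>2 + (cmod (of_real h * gx z))\<^sup>2)) \<partial>lborel)
      \<le> ennreal (3 * (\<integral>z. (cmod (\<psi> z))\<^sup>2 \<partial>Omega_lborel))"
    using L regularized_Agmon_estimate[OF h _ eig lam]
    by (intro nn_integral_exp_weight_le) (auto simp: square_integrable_def)
  then show ?thesis by (simp add: set_integral_OmegaGui)
qed

lemma eigenvalue_le_9_64:
  fixes \<Gamma> h lam :: real
  assumes "\<Gamma> > 0" "0 < h" "h < (1 / (64 * \<Gamma>)) powr (3/2)" "\<bar>lam - 1/8\<bar> \<le> \<Gamma> * h powr (2/3)"
  shows "lam \<le> 9/64"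
proof -
  have "h powr (2/3) < ((1 / (64 * \<Gamma>)) powr (3/2)) powr (2/3)"
    using assms by (intro powr_less_mono2) auto
  then have "\<Gamma> * h powr (2/3) < 1/64"
    using assms(1) by (simp add: powr_powr field_simps)
  then show ?thesis using assms(4) by linarith
qed

theorem proposition6p5:
  fixes \<Gamma> :: real
  assumes "\<Gamma> > 0"
  shows "\<exists>\<alpha>>0. \<exists>h0>0. \<exists>C>0. \<forall>h lam \<psi> gx gy.
     0 < h \<and> h < h0 \<and> gui_eigenpair h lam \<psi> gx gy \<and> \<bar>lam - 1/8\<bar> \<le> \<Gamma> * h powr (2/3) \<longrightarrow>
     (\<integral>\<^sup>+ z \<in> OmegaGui \<inter> {z. fst z \<ge> 0}.
         ennreal (exp (\<alpha> / h * fst z) * ((cmod (\<psi> z))\<^sup>2 + (cmod (of_real h * gx z))\<^sup>2)) \<partial>lborel)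
       \<le> ennreal (C * (LINT z:OmegaGui|lborel. (cmod (\<psi> z))\<^sup>2))"
proof -
  define h0 where "h0 = (1 / (64 * \<Gamma>)) powr (3/2)"
  have "h0 > 0" using assms by (simp add: h0_def)
  moreover have "\<forall>h lam \<psi> gx gy.
     0 < h \<and> h < h0 \<and> gui_eigenpair h lam \<psi> gx gy \<and> \<bar>lam - 1/8\<bar> \<le> \<Gamma> * h powr (2/3) \<longrightarrow>
     (\<integral>\<^sup>+ z \<in> OmegaGui \<inter> {z. fst z \<ge> 0}.
         ennreal (exp (1/8 / h * fst z) * ((cmod (\<psi> z))\<^sup>2 + (cmod (of_real h * gx z))\<^sup>2)) \<partial>lborel)
       \<le> ennreal (3 * (LINT z:OmegaGui|lborel. (cmod (\<psi> z))\<^sup>2))"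
    using Agmon_estimate_exp eigenvalue_le_9_64[OF assms] unfolding h0_def by blast
  moreover have "(1/8 :: real) > 0" "(3 :: real) > 0" by simp_all
  ultimately show ?thesis by blast
qed

end
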